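(* Let $k$ be a commutative ring, $n$ a positive integer and $R=(R^{ij}_{uv})\in M_n(k)\otimes M_n(k)$ a solution of the quantum Yang–Baxter equation $R^{12}R^{13}R^{23}=R^{23}R^{13}R^{12}$. Then the smash product $S_R(n)\#A(R)$ has the structure of an $S_R(n)$-bialgebroid with source, target, comultiplication and counit determined by $s(\xi_i)=\xi_i\#1$, $t(\xi_i)=\xi_u\#c^u_i$, $\Delta(\xi_i\#c^u_v)=\xi_i\#c^u_l\otimes_{S_R(n)}1\#c^l_v$, $\epsilon(\xi_i\#c^u_v)=\delta_{u,v}\xi_i$, for $i,u,v=1,\dots,n$ (summation over repeated indices).
   Context: Einstein summation convention. $A(R)$ (FRT bialgebra) is the $k$-algebra generated by $c^i_j$, $i,j=1,\dots,n$, subject to $R^{ij}_{vu}c^u_kc^v_l=R^{vu}_{lk}c^i_vc^j_u$ for all $i,j,k,l$, with matrix bialgebra structure $\Delta(c^i_j)=c^i_l\otimes c^l_j$, $\epsilon(c^i_j)=\delta_{ij}$. $S_R(n)$ is the $k$-algebra generated by $\xi_1,\dots,\xi_n$ subject to $\xi_u\xi_v=R^{li}_{uv}\xi_i\xi_l$ for all $u,v$. $S_R(n)$ is a left $A(R)$-module algebra and right $A(R)$-comodule via $c^j_v\cdot\xi_u=R^{ij}_{uv}\xi_i$ and $\xi_v\mapsto\xi_u\otimes c^u_v$. For a bialgebra $H$ and left $H$-module algebra $A$, the smash product $A\#H$ is $A\otimes H$ with product $(a\#g)(b\#h)=a(g_{(1)}\cdot b)\#g_{(2)}h$. An $A$-bialgebroid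 $(H,s,t,\Delta,\epsilon)$: $H$ a $k$-algebra, $s:A\to H$ an algebra map, $t:A\to H$ an anti-algebra map with $s(a)t(b)=t(b)s(a)$; $H$ is an $A$-bimodule via $a\cdot h=s(a)h$, $h\cdot a=t(a)h$, and $H\otimes_AH$ an $A$-bimodule via $a(g\otimes_Ah)b=s(a)g\otimes_At(b)h$; (B1) $\Delta:H\to H\otimes_AH$, $\epsilon:H\to A$ are $A$-bimodule maps forming a coassociative counital $A$-coring; (B2) $\mathrm{Im}\Delta\subseteq\Gamma:=\{\sum g^1\otimes_Ag^2:\sum g^1t(a)\otimes_Ag^2=\sum g^1\otimes_Ag^2s(a)\ \forall a\}$ and $\Delta:H\to\Gamma$ is an algebra map for the componentwise product on $\Gamma$; (B3) $\epsilon(1_H)=1_A$ and $\epsilon(gh)=\epsilon(gs(\epsilon(h)))=\epsilon(gt(\epsilon(h)))$ for all $g,h\in H$. *)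

theory Defs
  imports "HOL-Library.Poly_Mapping"
begin

definition psmult :: "'k::comm_ring_1 \<Rightarrow> ('a \<Rightarrow>\<^sub>0 'k) \<Rightarrow> ('a \<Rightarrow>\<^sub>0 'k)" where
  "psmult c p = (\<Sum>x\<in>Poly_Mapping.keys p. Poly_Mapping.single x (c * Poly_Mapping.lookup p x))"

definition bas :: "'a \<Rightarrow> ('a \<Rightarrow>\<^sub>0 'k::comm_ring_1)" where
  "bas x = Poly_Mapping.single x 1"

definition lin :: "('a \<Rightarrow> ('b \<Rightarrow>\<^sub>0 'k::comm_ring_1)) \<Rightarrow> ('a \<Rightarrow>\<^sub>0 'k) \<Rightarrow> ('b \<Rightarrow>\<^sub>0 'k)" where
  "lin f p = (\<Sum>x\<in>Poly_Mapping.keys p. psmult (Poly_Mapping.lookup p x) (f x))"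

definition bilin :: "('a \<Rightarrow> 'b \<Rightarrow> ('c \<Rightarrow>\<^sub>0 'k::comm_ring_1)) \<Rightarrow> ('a \<Rightarrow>\<^sub>0 'k) \<Rightarrow> ('b \<Rightarrow>\<^sub>0 'k) \<Rightarrow> ('c \<Rightarrow>\<^sub>0 'k)" where
  "bilin f p q = (\<Sum>x\<in>Poly_Mapping.keys p. \<Sum>y\<in>Poly_Mapping.keys q. psmult (Poly_Mapping.lookup p x * Poly_Mapping.lookup q y) (f x y))"

definition ptens :: "('a \<Rightarrow>\<^sub>0 'k::comm_ring_1) \<Rightarrow> ('b \<Rightarrow>\<^sub>0 'k) \<Rightarrow> ('a \<times> 'b \<Rightarrow>\<^sub>0 'k)" where
  "ptens p q = bilin (\<lambda>x y. bas (x, y)) p q"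

inductive_set kspan :: "('a \<Rightarrow>\<^sub>0 'k::comm_ring_1) set \<Rightarrow> ('a \<Rightarrow>\<^sub>0 'k) set" for G where
  kspan_zero: "0 \<in> kspan G"
| kspan_gen: "g \<in> G \<Longrightarrow> g \<in> kspan G"
| kspan_add: "x \<in> kspan G \<Longrightarrow> y \<in> kspan G \<Longrightarrow> x + y \<in> kspan G"
| kspan_smult: "x \<in> kspan G \<Longrightarrow> psmult c x \<in> kspan G"

definition fmul :: "('g list \<Rightarrow>\<^sub>0 'k::comm_ring_1) \<Rightarrow> ('g list \<Rightarrow>\<^sub>0 'k) \<Rightarrow> ('g list \<Rightarrow>\<^sub>0 'k)" where
  "fmul p q = bilin (\<lambda>x y. bas (x @ y)) p q"

definition fone :: "('g list \<Rightarrow>\<^sub>0 'k::comm_ring_1)" where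
  "fone = bas []"

definition fgen :: "'g \<Rightarrow> ('g list \<Rightarrow>\<^sub>0 'k::comm_ring_1)" where
  "fgen g = bas [g]"

definition fideal :: "('g list \<Rightarrow>\<^sub>0 'k::comm_ring_1) set \<Rightarrow> ('g list \<Rightarrow>\<^sub>0 'k) set" where
  "fideal Rel = kspan {fmul a (fmul r b) | a r b. r \<in> Rel}"

text \<open>\<open>R i j u v\<close> is the entry \<open>R^{ij}_{uv}\<close> of
  \<open>R = \<Sum> R^{ij}_{uv} E_{iu} \<otimes> E_{jv}\<close>; QYBE \<open>R^{12}R^{13}R^{23} = R^{23}R^{13}R^{12}\<close>
  written in coordinates.\<close>
definition QYBE :: "('n::finite \<Rightarrow> 'n \<Rightarrow> 'n \<Rightarrow> 'n \<Rightarrow> 'k::comm_ring_1) \<Rightarrow> bool" where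
  "QYBE R \<longleftrightarrow> (\<forall>x y z a b c.
     (\<Sum>i\<in>UNIV. \<Sum>j\<in>UNIV. \<Sum>k\<in>UNIV. R x y i j * R i z a k * R j k b c)
   = (\<Sum>i\<in>UNIV. \<Sum>j\<in>UNIV. \<Sum>k\<in>UNIV. R i j a b * R x k i c * R y z j k))"

text \<open>S_R(n): generators \<open>\<xi>_u\<close> (u :: 'n), relations \<open>\<xi>_u\<xi>_v = R^{li}_{uv}\<xi>_i\<xi>_l\<close>\<close>
definition SR_rel :: "('n::finite \<Rightarrow> 'n \<Rightarrow> 'n \<Rightarrow> 'n \<Rightarrow> 'k::comm_ring_1) \<Rightarrow> ('n list \<Rightarrow>\<^sub>0 'k) set" where
  "SR_rel R = {fmul (fgen u) (fgen v)
       - (\<Sum>i\<in>UNIV. \<Sum>l\<in>UNIV. psmult (R l i u v) (fmul (fgen i) (fgen l))) | u v. True}"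

definition SR_ker :: "('n::finite \<Rightarrow> 'n \<Rightarrow> 'n \<Rightarrow> 'n \<Rightarrow> 'k::comm_ring_1) \<Rightarrow> ('n list \<Rightarrow>\<^sub>0 'k) set" where
  "SR_ker R = fideal (SR_rel R)"

text \<open>A(R): generators \<open>c^i_j\<close> = (i,j), relations
  \<open>R^{ij}_{vu}c^u_kc^v_l = R^{vu}_{lk}c^i_vc^j_u\<close>\<close>
definition AR_rel :: "('n::finite \<Rightarrow> 'n \<Rightarrow> 'n \<Rightarrow> 'n \<Rightarrow> 'k::comm_ring_1) \<Rightarrow> (('n \<times> 'n) list \<Rightarrow>\<^sub>0 'k) set" where
  "AR_rel R = {(\<Sum>u\<in>UNIV. \<Sum>v\<in>UNIV. psmult (R i j v u) (fmul (fgen (u,k)) (fgen (v,l))))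
       - (\<Sum>u\<in>UNIV. \<Sum>v\<in>UNIV. psmult (R v u l k) (fmul (fgen (i,v)) (fgen (j,u)))) | i j k l. True}"

definition AR_ker :: "('n::finite \<Rightarrow> 'n \<Rightarrow> 'n \<Rightarrow> 'n \<Rightarrow> 'k::comm_ring_1) \<Rightarrow> (('n \<times> 'n) list \<Rightarrow>\<^sub>0 'k) set" where
  "AR_ker R = fideal (AR_rel R)"

text \<open>Comultiplication of A(R) on words: \<open>\<Delta>(c^i_j) = c^i_l \<otimes> c^l_j\<close>, multiplicative\<close>
primrec dA :: "('n::finite \<times> 'n) list \<Rightarrow> (('n \<times> 'n) list \<times> ('n \<times> 'n) list \<Rightarrow>\<^sub>0 'k::comm_ring_1)" where
  "dA [] = bas ([], [])"
| "dA (g # w) = (\<Sum>l\<in>UNIV. lin (\<lambda>(p, q). bas ((fst g, l) # p, (l, snd g) # q)) (dA w))"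

text \<open>Action of a generator \<open>c^j_v\<close> on a word in the \<open>\<xi>\<close>'s, via
  \<open>c^j_v\<cdot>\<xi>_u = R^{ij}_{uv}\<xi>_i\<close>, \<open>h\<cdot>(ab) = (h_1\<cdot>a)(h_2\<cdot>b)\<close>, \<open>h\<cdot>1 = \<epsilon>(h)1\<close>\<close>
fun acg :: "('n::finite \<Rightarrow> 'n \<Rightarrow> 'n \<Rightarrow> 'n \<Rightarrow> 'k::comm_ring_1) \<Rightarrow> 'n \<times> 'n \<Rightarrow> 'n list \<Rightarrow> ('n list \<Rightarrow>\<^sub>0 'k)" where
  "acg R g [] = (if fst g = snd g then fone else 0)"
| "acg R g (u # x) = (\<Sum>l\<in>UNIV. \<Sum>i\<in>UNIV. psmult (R i (fst g) u l) (fmul (fgen i) (acg R (l, snd g) x)))"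

primrec act :: "('n::finite \<Rightarrow> 'n \<Rightarrow> 'n \<Rightarrow> 'n \<Rightarrow> 'k::comm_ring_1) \<Rightarrow> ('n \<times> 'n) list \<Rightarrow> ('n list \<Rightarrow>\<^sub>0 'k) \<Rightarrow> ('n list \<Rightarrow>\<^sub>0 'k)" where
  "act R [] p = p"
| "act R (g # w) p = lin (acg R g) (act R w p)"

text \<open>Represented on the free module with basis (word in \<open>\<xi>\<close>, word in \<open>c\<close>),
  i.e. \<open>F_S \<otimes> F_A\<close>, modulo \<open>I_S \<otimes> F_A + F_S \<otimes> I_A\<close>;
  \<open>(a#g)(b#h) = a(g_1\<cdot>b) # g_2h\<close>.\<close>
definition smash_mul :: "('n::finite \<Rightarrow> 'n \<Rightarrow> 'n \<Rightarrow> 'n \<Rightarrow> 'k::comm_ring_1)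
   \<Rightarrow> ('n list \<times> ('n \<times> 'n) list \<Rightarrow>\<^sub>0 'k) \<Rightarrow> ('n list \<times> ('n \<times> 'n) list \<Rightarrow>\<^sub>0 'k) \<Rightarrow> ('n list \<times> ('n \<times> 'n) list \<Rightarrow>\<^sub>0 'k)" where
  "smash_mul R = bilin (\<lambda>(x, w) (y, w').
      lin (\<lambda>(w1, w2). ptens (fmul (bas x) (act R w1 (bas y))) (bas (w2 @ w'))) (dA w))"

definition smash_one :: "('n list \<times> ('n \<times> 'n) list \<Rightarrow>\<^sub>0 'k::comm_ring_1)" where
  "smash_one = bas ([], [])"

definition smash_ker :: "('n::finite \<Rightarrow> 'n \<Rightarrow> 'n \<Rightarrow> 'n \<Rightarrow> 'k::comm_ring_1) \<Rightarrow> ('n list \<times> ('n \<times> 'n) list \<Rightarrow>\<^sub>0 'k) set" where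
  "smash_ker R = kspan ({ptens x y | x y. x \<in> SR_ker R} \<union> {ptens x y | x y. y \<in> AR_ker R})"

section \<open>Bialgebroids (algebras given as free module modulo a kernel)\<close>

text \<open>\<open>(mul, one)\<close> induces a k-algebra structure on the quotient by \<open>N\<close>\<close>
definition quot_alg :: "(('a \<Rightarrow>\<^sub>0 'k::comm_ring_1) \<Rightarrow> ('a \<Rightarrow>\<^sub>0 'k) \<Rightarrow> ('a \<Rightarrow>\<^sub>0 'k)) \<Rightarrow> ('a \<Rightarrow>\<^sub>0 'k) \<Rightarrow> ('a \<Rightarrow>\<^sub>0 'k) set \<Rightarrow> bool" where
  "quot_alg mul one N \<longleftrightarrow>
     0 \<in> N \<and> (\<forall>x\<in>N. \<forall>y\<in>N. x + y \<in> N) \<and> (\<forall>c. \<forall>x\<in>N. psmult c x \<in> N) \<and>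
     (\<forall>x\<in>N. \<forall>y. mul x y \<in> N \<and> mul y x \<in> N) \<and>
     (\<forall>x y z. mul (x + y) z - (mul x z + mul y z) \<in> N \<and> mul z (x + y) - (mul z x + mul z y) \<in> N) \<and>
     (\<forall>c x y. mul (psmult c x) y - psmult c (mul x y) \<in> N \<and> mul x (psmult c y) - psmult c (mul x y) \<in> N) \<and>
     (\<forall>x y z. mul (mul x y) z - mul x (mul y z) \<in> N) \<and>
     (\<forall>x. mul one x - x \<in> N \<and> mul x one - x \<in> N)"

text \<open>\<open>f\<close> induces a k-linear map between the quotients by \<open>N\<close> and \<open>N'\<close>\<close>
definition lin_mod :: "('a \<Rightarrow>\<^sub>0 'k::comm_ring_1) set \<Rightarrow> (('a \<Rightarrow>\<^sub>0 'k) \<Rightarrow> ('b \<Rightarrow>\<^sub>0 'k)) \<Rightarrow> ('b \<Rightarrow>\<^sub>0 'k) set \<Rightarrow> bool" where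
  "lin_mod N f N' \<longleftrightarrow> (\<forall>x\<in>N. f x \<in> N') \<and>
     (\<forall>x y. f (x + y) - (f x + f y) \<in> N') \<and> (\<forall>c x. f (psmult c x) - psmult c (f x) \<in> N')"

text \<open>Kernel presenting \<open>H \<otimes>_A H\<close> (with \<open>h\<cdot>a = t(a)h\<close>, \<open>a\<cdot>h = s(a)h\<close>)\<close>
definition tker2 :: "(('h \<Rightarrow>\<^sub>0 'k::comm_ring_1) \<Rightarrow> ('h \<Rightarrow>\<^sub>0 'k) \<Rightarrow> ('h \<Rightarrow>\<^sub>0 'k)) \<Rightarrow> ('h \<Rightarrow>\<^sub>0 'k) set
    \<Rightarrow> (('a \<Rightarrow>\<^sub>0 'k) \<Rightarrow> ('h \<Rightarrow>\<^sub>0 'k)) \<Rightarrow> (('a \<Rightarrow>\<^sub>0 'k) \<Rightarrow> ('h \<Rightarrow>\<^sub>0 'k)) \<Rightarrow> ('h \<times> 'h \<Rightarrow>\<^sub>0 'k) set" where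
  "tker2 mulH NH s t = kspan ({ptens x y | x y. x \<in> NH} \<union> {ptens x y | x y. y \<in> NH}
      \<union> {ptens (mulH (t a) g) h - ptens g (mulH (s a) h) | a g h. True})"

text \<open>Kernel presenting \<open>H \<otimes>_A H \<otimes>_A H\<close>\<close>
definition tker3 :: "(('h \<Rightarrow>\<^sub>0 'k::comm_ring_1) \<Rightarrow> ('h \<Rightarrow>\<^sub>0 'k) \<Rightarrow> ('h \<Rightarrow>\<^sub>0 'k)) \<Rightarrow> ('h \<Rightarrow>\<^sub>0 'k) set
    \<Rightarrow> (('a \<Rightarrow>\<^sub>0 'k) \<Rightarrow> ('h \<Rightarrow>\<^sub>0 'k)) \<Rightarrow> (('a \<Rightarrow>\<^sub>0 'k) \<Rightarrow> ('h \<Rightarrow>\<^sub>0 'k)) \<Rightarrow> ('h \<times> 'h \<times> 'h \<Rightarrow>\<^sub>0 'k) set" where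
  "tker3 mulH NH s t = kspan ({ptens x (ptens y z) | x y z. x \<in> NH}
      \<union> {ptens x (ptens y z) | x y z. y \<in> NH} \<union> {ptens x (ptens y z) | x y z. z \<in> NH}
      \<union> {ptens (mulH (t a) x) (ptens y z) - ptens x (ptens (mulH (s a) y) z) | a x y z. True}
      \<union> {ptens x (ptens (mulH (t a) y) z) - ptens x (ptens y (mulH (s a) z)) | a x y z. True})"

definition bialgebroid ::
  "(('a \<Rightarrow>\<^sub>0 'k::comm_ring_1) \<Rightarrow> ('a \<Rightarrow>\<^sub>0 'k) \<Rightarrow> ('a \<Rightarrow>\<^sub>0 'k)) \<Rightarrow> ('a \<Rightarrow>\<^sub>0 'k) \<Rightarrow> ('a \<Rightarrow>\<^sub>0 'k) set \<Rightarrow>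
   (('h \<Rightarrow>\<^sub>0 'k) \<Rightarrow> ('h \<Rightarrow>\<^sub>0 'k) \<Rightarrow> ('h \<Rightarrow>\<^sub>0 'k)) \<Rightarrow> ('h \<Rightarrow>\<^sub>0 'k) \<Rightarrow> ('h \<Rightarrow>\<^sub>0 'k) set \<Rightarrow>
   (('a \<Rightarrow>\<^sub>0 'k) \<Rightarrow> ('h \<Rightarrow>\<^sub>0 'k)) \<Rightarrow> (('a \<Rightarrow>\<^sub>0 'k) \<Rightarrow> ('h \<Rightarrow>\<^sub>0 'k)) \<Rightarrow>
   (('h \<Rightarrow>\<^sub>0 'k) \<Rightarrow> ('h \<times> 'h \<Rightarrow>\<^sub>0 'k)) \<Rightarrow> (('h \<Rightarrow>\<^sub>0 'k) \<Rightarrow> ('a \<Rightarrow>\<^sub>0 'k)) \<Rightarrow> bool" where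
  "bialgebroid mulA oneA NA mulH oneH NH s t D E \<longleftrightarrow>
   quot_alg mulA oneA NA \<and> quot_alg mulH oneH NH \<and>
   \<comment> \<open>s algebra map, t anti-algebra map, commuting images\<close>
   lin_mod NA s NH \<and> (\<forall>a b. s (mulA a b) - mulH (s a) (s b) \<in> NH) \<and> s oneA - oneH \<in> NH \<and>
   lin_mod NA t NH \<and> (\<forall>a b. t (mulA a b) - mulH (t b) (t a) \<in> NH) \<and> t oneA - oneH \<in> NH \<and>
   (\<forall>a b. mulH (s a) (t b) - mulH (t b) (s a) \<in> NH) \<and>
   \<comment> \<open>(B1) A-coring structure\<close>
   lin_mod NH D (tker2 mulH NH s t) \<and> lin_mod NH E NA \<and>
   (\<forall>a b h. D (mulH (s a) (mulH (t b) h))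
      - lin (\<lambda>(x, y). ptens (mulH (s a) (bas x)) (mulH (t b) (bas y))) (D h) \<in> tker2 mulH NH s t) \<and>
   (\<forall>a b h. E (mulH (s a) (mulH (t b) h)) - mulA a (mulA (E h) b) \<in> NA) \<and>
   (\<forall>h. lin (\<lambda>(x, y). lin (\<lambda>(p, q). bas (p, q, y)) (D (bas x))) (D h)
      - lin (\<lambda>(x, y). ptens (bas x) (D (bas y))) (D h) \<in> tker3 mulH NH s t) \<and>
   (\<forall>h. lin (\<lambda>(x, y). mulH (s (E (bas x))) (bas y)) (D h) - h \<in> NH) \<and>
   (\<forall>h. lin (\<lambda>(x, y). mulH (t (E (bas y))) (bas x)) (D h) - h \<in> NH) \<and>
   \<comment> \<open>(B2) image in the Takeuchi product, multiplicative\<close>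
   (\<forall>h a. lin (\<lambda>(x, y). ptens (mulH (bas x) (t a)) (bas y)) (D h)
      - lin (\<lambda>(x, y). ptens (bas x) (mulH (bas y) (s a))) (D h) \<in> tker2 mulH NH s t) \<and>
   (\<forall>g h. D (mulH g h) - bilin (\<lambda>(x, y) (x', y'). ptens (mulH (bas x) (bas x')) (mulH (bas y) (bas y')))
      (D g) (D h) \<in> tker2 mulH NH s t) \<and>
   D oneH - ptens oneH oneH \<in> tker2 mulH NH s t \<and>
   \<comment> \<open>(B3)\<close>
   E oneH - oneA \<in> NA \<and>
   (\<forall>g h. E (mulH g h) - E (mulH g (s (E h))) \<in> NA \<and> E (mulH g h) - E (mulH g (t (E h))) \<in> NA)"

end

(* The smash product H = S_R(n) # A(R) is modelled as the free k-module on pairs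
   (word in the xi's, word in the c's) modulo the span of the tensors x \<otimes> y with x a
   relation of S_R(n) or y a relation of A(R).

   The QYBE is used twice: a generator c^j_v maps each defining relation of S_R(n) to a
   combination of such relations, and the defining relations of A(R) act by zero on S_R(n).
   Together these make the kernel of H a two-sided ideal. Source and target commute because
   moving xi_i past t(xi_j) = xi_u # c^u_j produces exactly a defining relation of S_R(n),
   and the target respects the relations of S_R(n) because products of two target
   generators can be normalised with the relations of both algebras. Coassociativity,
   counitality and multiplicativity of the comultiplication hold already on the free level.
   The Takeuchi condition holds for the source elements and for the generators 1 # c^p_q,
   and it propagates along products. *)

theory Submission
  imports Defs HOL.Modules
begin

type_synonym ('n, 'k) rmatrix = "'n \<Rightarrow> 'n \<Rightarrow> 'n \<Rightarrow> 'n \<Rightarrow> 'k"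
type_synonym ('n, 'k) free_S = "'n list \<Rightarrow>\<^sub>0 'k"
type_synonym ('n, 'k) free_A = "('n \<times> 'n) list \<Rightarrow>\<^sub>0 'k"
type_synonym ('n, 'k) free_H = "'n list \<times> ('n \<times> 'n) list \<Rightarrow>\<^sub>0 'k"

section \<open>Linear extension on free modules\<close>

lemma lookup_psmult[simp]: "Poly_Mapping.lookup (psmult c p) x = c * Poly_Mapping.lookup p x"
proof -
  have "Poly_Mapping.lookup (psmult c p) x =
     (\<Sum>y\<in>Poly_Mapping.keys p. (c * Poly_Mapping.lookup p y when y = x))"
    unfolding psmult_def by (simp add: lookup_sum lookup_single)
  also have "\<dots> = c * Poly_Mapping.lookup p x"
  proof (cases "x \<in> Poly_Mapping.keys p")
    case True
    then show ?thesis by (simp add: sum.delta' when_def)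
  next
    case False
    then show ?thesis
      by (auto simp: when_def in_keys_iff intro!: sum.neutral)
  qed
  finally show ?thesis .
qed

interpretation pm: module psmult
  by standard (auto intro!: poly_mapping_eqI simp: lookup_add algebra_simps)

lemma lookup_bas: "Poly_Mapping.lookup (bas x) y = (if x = y then 1 else 0)"
  by (simp add: bas_def lookup_single when_def)

lemma keys_psmult: "Poly_Mapping.keys (psmult c p) \<subseteq> Poly_Mapping.keys p"
  by (auto simp: in_keys_iff)

lemma lin_superset:
  assumes "finite A" "Poly_Mapping.keys p \<subseteq> A"
  shows "lin f p = (\<Sum>x\<in>A. psmult (Poly_Mapping.lookup p x) (f x))"
  unfolding lin_def
  by (rule sum.mono_neutral_left) (use assms in \<open>auto simp: in_keys_iff\<close>)

lemma lin_add: "lin f (p + q) = lin f p + lin f q"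
proof -
  let ?A = "Poly_Mapping.keys p \<union> Poly_Mapping.keys q"
  have "Poly_Mapping.keys (p + q) \<subseteq> ?A" by (rule keys_add)
  then have "lin f (p + q) = (\<Sum>x\<in>?A. psmult (Poly_Mapping.lookup (p+q) x) (f x))"
    by (intro lin_superset) auto
  also have "\<dots> = (\<Sum>x\<in>?A. psmult (Poly_Mapping.lookup p x) (f x))
    + (\<Sum>x\<in>?A. psmult (Poly_Mapping.lookup q x) (f x))"
    by (simp add: lookup_add pm.scale_left_distrib sum.distrib)
  also have "\<dots> = lin f p + lin f q"
    by (subst (1 2) lin_superset[symmetric]) auto
  finally show ?thesis .
qed

lemma lin_psmult: "lin f (psmult c p) = psmult c (lin f p)"
proof -
  have "lin f (psmult c p) = (\<Sum>x\<in>Poly_Mapping.keys p. psmult (Poly_Mapping.lookup (psmult c p) x) (f x))"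
    by (rule lin_superset) (auto simp: keys_psmult)
  then show ?thesis by (simp add: lin_def pm.scale_sum_right)
qed

lemma lin_zero[simp]: "lin f 0 = 0"
  by (simp add: lin_def)

lemma lin_bas[simp]: "lin f (bas x) = f x"
  by (simp add: lin_def bas_def)

lemma lin_uminus: "lin f (- p) = - lin f p"
  using lin_psmult[of f "-1" p] by (simp add: pm.scale_minus_left[symmetric])

lemma psmult_minus1: "psmult (-1) p = - p"
  by (simp add: pm.scale_minus_left)

lemma lin_diff: "lin f (p - q) = lin f p - lin f q"
  using lin_add[of f p "-q"] by (simp add: lin_uminus)

lemma lin_sum: "lin f (sum g A) = (\<Sum>a\<in>A. lin f (g a))"
  by (induct A rule: infinite_finite_induct) (auto simp: lin_add)

lemma lin_expand: "lin bas p = p"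
proof (rule poly_mapping_eqI)
  fix y
  have "Poly_Mapping.lookup (lin bas p) y = (\<Sum>x\<in>Poly_Mapping.keys p. (if x
    = y then Poly_Mapping.lookup p x else 0))"
    by (simp add: lin_def lookup_sum lookup_bas if_distrib cong: if_cong)
  also have "\<dots> = Poly_Mapping.lookup p y"
    by (simp add: sum.delta in_keys_iff)
  finally show "Poly_Mapping.lookup (lin bas p) y = Poly_Mapping.lookup p y" .
qed

lemma lin_add_fun: "lin (\<lambda>x. f x + g x) p = lin f p + lin g p"
  by (simp add: lin_def pm.scale_right_distrib sum.distrib)

lemma lin_diff_fun: "lin (\<lambda>x. f x - g x) p = lin f p - lin g p"
  by (simp add: lin_def pm.scale_right_diff_distrib sum_subtractf)

lemma lin_psmult_fun: "lin (\<lambda>x. psmult c (f x)) p = psmult c (lin f p)"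
  by (simp add: lin_def pm.scale_sum_right mult.commute)

definition k_linear :: "(('a \<Rightarrow>\<^sub>0 'k::comm_ring_1) \<Rightarrow> ('b \<Rightarrow>\<^sub>0 'k)) \<Rightarrow> bool"
  where "k_linear F \<longleftrightarrow>
    (\<forall>p q. F (p + q) = F p + F q) \<and> (\<forall>c p. F (psmult c p) = psmult c (F p))"

lemma k_linear_lin[simp]: "k_linear (lin f)"
  by (simp add: k_linear_def lin_add lin_psmult)

lemma k_linear_zero: "k_linear F \<Longrightarrow> F 0 = 0"
  unfolding k_linear_def by (metis add_cancel_right_right)

lemma k_linear_sum: "k_linear F \<Longrightarrow> F (sum g A) = (\<Sum>a\<in>A. F (g a))"
  by (induct A rule: infinite_finite_induct) (auto simp: k_linear_zero k_linear_def)

lemma k_linear_eq_lin: assumes "k_linear F" shows "F p = lin (\<lambda>x. F (bas x)) p"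
proof -
  have "F p = F (lin bas p)" by (simp add: lin_expand)
  also have "\<dots> = (\<Sum>x\<in>Poly_Mapping.keys p. F (psmult (Poly_Mapping.lookup p x) (bas x)))"
    by (simp add: lin_def k_linear_sum[OF assms])
  also have "\<dots> = lin (\<lambda>x. F (bas x)) p"
    using assms by (simp add: lin_def k_linear_def)
  finally show ?thesis .
qed

lemma k_linear_minus: assumes "k_linear F" shows "F (p - q) = F p - F q"
proof -
  have "F (p - q) + F q = F p" using assms unfolding k_linear_def by (metis diff_add_cancel)
  then show ?thesis by (simp add: eq_diff_eq)
qed

lemma k_linear_eqI:
  "k_linear F \<Longrightarrow> k_linear G \<Longrightarrow> (\<And>x. F (bas x) = G (bas x)) \<Longrightarrow> F p = G p"
  by (subst (1 2) k_linear_eq_lin[where p=p]) auto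

lemma k_linear_id[simp]: "k_linear (\<lambda>p. p)"
  by (simp add: k_linear_def)

lemma k_linear_comp: "k_linear F \<Longrightarrow> k_linear G \<Longrightarrow> k_linear (\<lambda>p. F (G p))"
  by (simp add: k_linear_def)

lemma lin_comp_k_linear: "k_linear F \<Longrightarrow> F (lin f p) = lin (\<lambda>x. F (f x)) p"
  by (rule k_linear_eqI[where p=p]) (auto intro: k_linear_comp)

lemma bilin_lin: "bilin f p q = lin (\<lambda>x. lin (\<lambda>y. f x y) q) p"
  by (simp add: bilin_def lin_def pm.scale_sum_right mult.commute)

lemma bilin_bas[simp]: "bilin f (bas x) (bas y) = f x y"
  by (simp add: bilin_lin)

lemma k_linear_bilin1[simp]: "k_linear (\<lambda>p. bilin f p q)"
  by (simp add: bilin_lin)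

lemma k_linear_bilin2[simp]: "k_linear (bilin f p)"
  unfolding bilin_lin k_linear_def
  by (auto simp: lin_add lin_psmult lin_add_fun lin_psmult_fun)

lemma bilin_add1: "bilin f (p + p') q = bilin f p q + bilin f p' q"
  and bilin_add2: "bilin f p (q + q') = bilin f p q + bilin f p q'"
  and bilin_psmult1: "bilin f (psmult c p) q = psmult c (bilin f p q)"
  and bilin_psmult2: "bilin f p (psmult c q) = psmult c (bilin f p q)"
  using k_linear_bilin1[of f q] k_linear_bilin2[of f p] unfolding k_linear_def by auto

lemma bilin_diff1: "bilin f (p - p') q = bilin f p q - bilin f p' q"
  and bilin_diff2: "bilin f p (q - q') = bilin f p q - bilin f p q'"
  and bilin_sum1: "bilin f (sum g A) q = (\<Sum>a\<in>A. bilin f (g a) q)"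
  and bilin_sum2: "bilin f p (sum g A) = (\<Sum>a\<in>A. bilin f p (g a))"
  and bilin_zero1[simp]: "bilin f 0 q = 0"
  and bilin_zero2[simp]: "bilin f p 0 = 0"
  using k_linear_minus[OF k_linear_bilin1[of f q]] k_linear_minus[OF k_linear_bilin2[of f p]]
    k_linear_sum[OF k_linear_bilin1[of f q]] k_linear_sum[OF k_linear_bilin2[of f p]]
    k_linear_zero[OF k_linear_bilin1[of f q]] k_linear_zero[OF k_linear_bilin2[of f p]]
  by auto

lemma k_bilinear_eqI:
  assumes "\<And>q. k_linear (\<lambda>p. F p q)" "\<And>p. k_linear (\<lambda>q. F p q)"
    "\<And>q. k_linear (\<lambda>p. G p q)" "\<And>p. k_linear (\<lambda>q. G p q)"
    "\<And>x y. F (bas x) (bas y) = G (bas x) (bas y)"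
  shows "F p q = G p q"
proof -
  have "F (bas x) q = G (bas x) q" for x
    by (rule k_linear_eqI[where p=q]) (use assms in auto)
  then show ?thesis by (intro k_linear_eqI[where p=p, of "\<lambda>p. F p q" "\<lambda>p. G p q"]) (use assms in auto)
qed

lemma k_trilinear_eqI:
  assumes "\<And>q r. k_linear (\<lambda>p. F p q r)" "\<And>p r. k_linear (\<lambda>q. F p q r)" "\<And>p q. k_linear (\<lambda>r. F p q r)"
    "\<And>q r. k_linear (\<lambda>p. G p q r)" "\<And>p r. k_linear (\<lambda>q. G p q r)" "\<And>p q. k_linear (\<lambda>r. G p q r)"
    "\<And>x y z. F (bas x) (bas y) (bas z) = G (bas x) (bas y) (bas z)"
  shows "F p q r = G p q r"
proof -
  have "F (bas x) q r = G (bas x) q r" for x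
    by (rule k_bilinear_eqI[of "F (bas x)" "G (bas x)"]) (use assms in auto)
  then show ?thesis by (intro k_linear_eqI[where p=p, of "\<lambda>p. F p q r" "\<lambda>p. G p q r"]) (use assms in auto)
qed

section \<open>Submodules and congruences\<close>

definition kcong :: "('a \<Rightarrow>\<^sub>0 'k::comm_ring_1) set \<Rightarrow> ('a \<Rightarrow>\<^sub>0 'k) \<Rightarrow> ('a \<Rightarrow>\<^sub>0 'k) \<Rightarrow> bool"
  where "kcong N a b \<longleftrightarrow> a - b \<in> N"

locale ksubmodule =
  fixes N :: "('a \<Rightarrow>\<^sub>0 'k::comm_ring_1) set"
  assumes zero[simp, intro]: "0 \<in> N"
    and add: "x \<in> N \<Longrightarrow> y \<in> N \<Longrightarrow> x + y \<in> N"
    and psmult: "x \<in> N \<Longrightarrow> psmult c x \<in> N"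
begin

lemma uminus: "x \<in> N \<Longrightarrow> - x \<in> N"
  using psmult[of x "-1"] by (simp add: psmult_minus1)

lemma diff: "x \<in> N \<Longrightarrow> y \<in> N \<Longrightarrow> x - y \<in> N"
  using add[of x "- y"] uminus[of y] by simp

lemma sum: "(\<And>a. a \<in> A \<Longrightarrow> f a \<in> N) \<Longrightarrow> sum f A \<in> N"
  by (induct A rule: infinite_finite_induct) (auto intro: add)

lemma lin: "(\<And>x. f x \<in> N) \<Longrightarrow> lin f p \<in> N"
  unfolding lin_def by (intro sum psmult)

lemma image_kspan:
  assumes "x \<in> kspan G" "k_linear F" "\<And>g. g \<in> G \<Longrightarrow> F g \<in> N"
  shows "F x \<in> N"
  using assms(1)
  by (induct x rule: kspan.induct)
     (use assms(2,3) in \<open>auto simp: k_linear_zero k_linear_def intro: add psmult\<close>)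

lemma cong_refl[simp]: "kcong N a a"
  by (simp add: kcong_def)

lemma cong_sym: "kcong N a b \<Longrightarrow> kcong N b a"
  unfolding kcong_def using uminus[of "a - b"] by simp

lemma cong_trans[trans]: "kcong N a b \<Longrightarrow> kcong N b c \<Longrightarrow> kcong N a c"
  unfolding kcong_def using add[of "a - b" "b - c"] by simp

(* First-order instances of the substitution rules: without them, calculational steps
   mixing = and kcong fall back to higher-order unification over large sums, which does
   not terminate in practice. *)
lemma cong_trans_eq1[trans]: "a = b \<Longrightarrow> kcong N b c \<Longrightarrow> kcong N a c"
  and cong_trans_eq2[trans]: "kcong N a b \<Longrightarrow> b = c \<Longrightarrow> kcong N a c"
  by simp_all

lemma cong_diff: "kcong N a b \<Longrightarrow> kcong N c d \<Longrightarrow> kcong N (a - c) (b - d)"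
  unfolding kcong_def using diff[of "a - b" "c - d"] by (simp add: algebra_simps)

lemma cong_psmult: "kcong N a b \<Longrightarrow> kcong N (psmult c a) (psmult c b)"
  unfolding kcong_def using psmult by (metis pm.scale_right_diff_distrib)

lemma cong_sum:
  "(\<And>x. x \<in> A \<Longrightarrow> kcong N (f x) (g x)) \<Longrightarrow> kcong N (sum f A) (sum g A)"
  unfolding kcong_def by (simp add: sum_subtractf[symmetric] sum)

lemma cong_lin: "(\<And>x. kcong N (f x) (g x)) \<Longrightarrow> kcong N (lin f p) (lin g p)"
  unfolding kcong_def by (simp add: lin_diff_fun[symmetric] lin)

lemma cong_k_linear:
  "k_linear F \<Longrightarrow> k_linear G \<Longrightarrow> (\<And>x. kcong N (F (bas x)) (G (bas x))) \<Longrightarrow> kcong N (F p) (G p)"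
  by (subst (1 2) k_linear_eq_lin[where p=p]) (auto intro: cong_lin)

lemma cong_plus_ker: "x \<in> N \<Longrightarrow> kcong N (a + x) a"
  by (simp add: kcong_def)

lemma cong_minus_ker: "x \<in> N \<Longrightarrow> kcong N (a - x) a"
  by (simp add: kcong_def uminus)

end

lemma ksubmodule_kspan: "ksubmodule (kspan G)"
  by standard (auto intro: kspan.intros)

section \<open>Free algebras and tensor products\<close>

lemma fmul_bas[simp]: "fmul (bas x) (bas y) = bas (x @ y)"
  by (simp add: fmul_def)

lemma fmul_add1: "fmul (p + p') q = fmul p q + fmul p' q"
  and fmul_add2: "fmul p (q + q') = fmul p q + fmul p q'"
  and fmul_psmult1: "fmul (psmult c p) q = psmult c (fmul p q)"
  and fmul_psmult2: "fmul p (psmult c q) = psmult c (fmul p q)"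
  and fmul_diff1: "fmul (p - p') q = fmul p q - fmul p' q"
  and fmul_diff2: "fmul p (q - q') = fmul p q - fmul p q'"
  and fmul_sum1: "fmul (sum g A) q = (\<Sum>a\<in>A. fmul (g a) q)"
  and fmul_sum2: "fmul p (sum g A) = (\<Sum>a\<in>A. fmul p (g a))"
  and fmul_zero1[simp]: "fmul 0 q = 0"
  and fmul_zero2[simp]: "fmul p 0 = 0"
  by (simp_all add: fmul_def bilin_add1 bilin_add2 bilin_psmult1 bilin_psmult2 bilin_diff1 bilin_diff2
      bilin_sum1 bilin_sum2)

lemma k_linear_fmul1[simp]: "k_linear (\<lambda>p. fmul p q)" and k_linear_fmul2[simp]: "k_linear (fmul p)"
  by (simp_all add: k_linear_def fmul_add1 fmul_add2 fmul_psmult1 fmul_psmult2)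

lemmas fmul_lin = fmul_add1 fmul_add2 fmul_psmult1 fmul_psmult2 fmul_diff1 fmul_diff2 fmul_sum1 fmul_sum2

lemma fmul_assoc: "fmul (fmul p q) r = fmul p (fmul q r)"
  by (rule k_trilinear_eqI[of "\<lambda>p q r. fmul (fmul p q) r" "\<lambda>p q r. fmul p (fmul q r)"])
     (simp_all add: k_linear_def fmul_add1 fmul_add2 fmul_psmult1 fmul_psmult2)

lemma fone_fmul[simp]: "fmul fone p = p"
  by (rule k_linear_eqI[of "fmul fone" "\<lambda>p. p"]) (auto simp: fone_def)

lemma fmul_fone[simp]: "fmul p fone = p"
  by (rule k_linear_eqI[of "\<lambda>p. fmul p fone" "\<lambda>p. p"]) (auto simp: fone_def)

lemma fgen_fgen: "fmul (fgen u) (fgen v) = bas [u, v]"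
  by (simp add: fgen_def)

interpretation fideal: ksubmodule "fideal Rel" for Rel
  unfolding fideal_def by (rule ksubmodule_kspan)

lemma fideal_gen: "r \<in> Rel \<Longrightarrow> fmul a (fmul r b) \<in> fideal Rel"
  unfolding fideal_def by (intro kspan_gen) blast

lemma fideal_rel: "r \<in> Rel \<Longrightarrow> r \<in> fideal Rel"
  using fideal_gen[of r Rel fone fone] by simp

lemma (in ksubmodule) image_fideal:
  assumes "x \<in> fideal Rel" "k_linear F" "\<And>a r b. r \<in> Rel \<Longrightarrow> F (fmul a (fmul r b)) \<in> N"
  shows "F x \<in> N"
  using assms(1)[unfolded fideal_def] assms(2) by (rule image_kspan) (auto intro: assms(3))

lemma fideal_mul:
  assumes "x \<in> fideal Rel"
  shows "fmul x y \<in> fideal Rel" "fmul y x \<in> fideal Rel"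
proof -
  show "fmul x y \<in> fideal Rel"
    using assms by (rule fideal.image_fideal) (simp_all add: fmul_assoc fideal_gen)
  show "fmul y x \<in> fideal Rel"
    using assms by (rule fideal.image_fideal) (use fideal_gen[of _ Rel "fmul y _"] in \<open>simp_all add: fmul_assoc\<close>)
qed

lemma quot_alg_free: "quot_alg fmul fone (fideal Rel)"
  unfolding quot_alg_def
  by (auto simp: fmul_lin fmul_assoc intro: fideal_mul fideal.add fideal.psmult)

lemma ptens_bas[simp]: "ptens (bas x) (bas y) = bas (x, y)"
  by (simp add: ptens_def)

lemma ptens_add1: "ptens (p + p') q = ptens p q + ptens p' q"
  and ptens_add2: "ptens p (q + q') = ptens p q + ptens p q'"
  and ptens_psmult1: "ptens (psmult c p) q = psmult c (ptens p q)"
  and ptens_psmult2: "ptens p (psmult c q) = psmult c (ptens p q)"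
  by (simp_all add: ptens_def bilin_add1 bilin_add2 bilin_psmult1 bilin_psmult2)

lemma k_linear_ptens1[simp]: "k_linear (\<lambda>p. ptens p q)" and k_linear_ptens2[simp]: "k_linear (ptens p)"
  by (simp_all add: k_linear_def ptens_add1 ptens_add2 ptens_psmult1 ptens_psmult2)

lemma ptens_diff1: "ptens (p - p') q = ptens p q - ptens p' q"
  and ptens_diff2: "ptens p (q - q') = ptens p q - ptens p q'"
  and ptens_sum1: "ptens (sum g A) q = (\<Sum>a\<in>A. ptens (g a) q)"
  and ptens_sum2: "ptens p (sum g A) = (\<Sum>a\<in>A. ptens p (g a))"
  and ptens_zero1[simp]: "ptens 0 q = 0"
  and ptens_zero2[simp]: "ptens p 0 = 0"
  using k_linear_minus[OF k_linear_ptens1[of q]] k_linear_minus[OF k_linear_ptens2[of p]]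
    k_linear_sum[OF k_linear_ptens1[of q]] k_linear_sum[OF k_linear_ptens2[of p]]
    k_linear_zero[OF k_linear_ptens1[of q]] k_linear_zero[OF k_linear_ptens2[of p]]
  by auto

lemmas ptens_lin = ptens_add1 ptens_add2 ptens_psmult1 ptens_psmult2 ptens_diff1 ptens_diff2 ptens_sum1 ptens_sum2

definition tens_mul :: "(('a \<Rightarrow>\<^sub>0 'k::comm_ring_1) \<Rightarrow> ('a \<Rightarrow>\<^sub>0 'k) \<Rightarrow> ('a \<Rightarrow>\<^sub>0 'k))
    \<Rightarrow> ('a \<times> 'a \<Rightarrow>\<^sub>0 'k) \<Rightarrow> ('a \<times> 'a \<Rightarrow>\<^sub>0 'k) \<Rightarrow> ('a \<times> 'a \<Rightarrow>\<^sub>0 'k)"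
  where
  "tens_mul mul X Y = bilin (\<lambda>(x, y) (x', y'). ptens (mul (bas x) (bas x')) (mul (bas y) (bas y'))) X Y"

lemma tens_mul_bas:
  "tens_mul mul (bas (x, y)) (bas (x', y')) = ptens (mul (bas x) (bas x')) (mul (bas y) (bas y'))"
  by (simp add: tens_mul_def)

lemma tens_mul_add1: "tens_mul mul (p + p') q = tens_mul mul p q + tens_mul mul p' q"
  and tens_mul_add2: "tens_mul mul p (q + q') = tens_mul mul p q + tens_mul mul p q'"
  and tens_mul_psmult1: "tens_mul mul (psmult c p) q = psmult c (tens_mul mul p q)"
  and tens_mul_psmult2: "tens_mul mul p (psmult c q) = psmult c (tens_mul mul p q)"
  and tens_mul_diff1: "tens_mul mul (p - p') q = tens_mul mul p q - tens_mul mul p' q"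
  and tens_mul_diff2: "tens_mul mul p (q - q') = tens_mul mul p q - tens_mul mul p q'"
  and tens_mul_sum1: "tens_mul mul (sum g A) q = (\<Sum>a\<in>A. tens_mul mul (g a) q)"
  and tens_mul_sum2: "tens_mul mul p (sum g A) = (\<Sum>a\<in>A. tens_mul mul p (g a))"
  and tens_mul_zero1[simp]: "tens_mul mul 0 q = 0"
  and tens_mul_zero2[simp]: "tens_mul mul p 0 = 0"
  by (simp_all add: tens_mul_def bilin_add1 bilin_add2 bilin_psmult1 bilin_psmult2 bilin_diff1 bilin_diff2
      bilin_sum1 bilin_sum2)

lemma tens_mul_ptens:
  assumes "\<And>q. k_linear (\<lambda>p. mul p q)" "\<And>p. k_linear (mul p)"
  shows "tens_mul mul (ptens a b) (ptens c d) = ptens (mul a c) (mul b d)"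
proof -
  have L1: "k_linear (\<lambda>p. ptens (mul p q) r)" "k_linear (\<lambda>p. ptens (mul q p) r)"
    "k_linear (\<lambda>p. ptens r (mul p q))" "k_linear (\<lambda>p. ptens r (mul q p))" for q r
    using assms unfolding k_linear_def by (simp_all add: ptens_lin)
  have L2: "k_linear (\<lambda>p. tens_mul mul (ptens p q) r)" "k_linear (\<lambda>p. tens_mul mul (ptens q p) r)"
    "k_linear (\<lambda>p. tens_mul mul r (ptens p q))" "k_linear (\<lambda>p. tens_mul mul r (ptens q p))" for q r
    unfolding k_linear_def by (simp_all add: ptens_lin tens_mul_add1 tens_mul_add2 tens_mul_psmult1 tens_mul_psmult2)
  have B: "tens_mul mul (ptens (bas x) (bas y)) (ptens c d) = ptens (mul (bas x) c) (mul (bas y) d)" for x y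
    by (rule k_bilinear_eqI[of "\<lambda>c d. tens_mul mul (ptens (bas x) (bas y)) (ptens c d)"])
       (simp_all only: tens_mul_bas ptens_bas L1 L2)
  show ?thesis
    by (rule k_bilinear_eqI[of "\<lambda>a b. tens_mul mul (ptens a b) (ptens c d)" "\<lambda>a b. ptens (mul a c) (mul b d)"])
       (simp_all only: L1 L2 B)
qed

lemma k_linear_tens_mul1[simp]:
  "k_linear (\<lambda>X. tens_mul mul X Y)" and k_linear_tens_mul2[simp]: "k_linear (tens_mul mul X)"
  by (simp_all add: k_linear_def tens_mul_add1 tens_mul_add2 tens_mul_psmult1 tens_mul_psmult2)

lemma tens_mul_assoc:
  assumes "\<And>q. k_linear (\<lambda>p. mul p q)" "\<And>p. k_linear (mul p)"
    "\<And>p q r. mul (mul p q) r = mul p (mul q r)"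
  shows "tens_mul mul (tens_mul mul X Y) Z = tens_mul mul X (tens_mul mul Y Z)"
proof (rule k_trilinear_eqI[of "\<lambda>X Y Z. tens_mul mul (tens_mul mul X Y) Z" "\<lambda>X Y Z. tens_mul mul X (tens_mul mul Y Z)"])
  fix x y z :: "'a \<times> 'a"
  obtain x1 x2 y1 y2 z1 z2 where "x = (x1, x2)" "y = (y1, y2)" "z = (z1, z2)" by (metis prod.exhaust)
  then show "tens_mul mul (tens_mul mul (bas x) (bas y)) (bas z)
    = tens_mul mul (bas x) (tens_mul mul (bas y) (bas z))"
    by (simp add: tens_mul_bas ptens_bas[symmetric] tens_mul_ptens assms del: ptens_bas)
qed (unfold k_linear_def; simp add: tens_mul_add1 tens_mul_add2 tens_mul_psmult1 tens_mul_psmult2)+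

lemma tens_mul_ptens_right:
  assumes "\<And>q. k_linear (\<lambda>p. mul p q)" "\<And>p. k_linear (mul p)"
  shows "tens_mul mul (ptens x y) W = lin (\<lambda>(p, q). ptens (mul x (bas p)) (mul y (bas q))) W"
proof (rule k_linear_eqI[of "tens_mul mul (ptens x y)"])
  fix z :: "'a \<times> 'a"
  obtain a b where "z = (a, b)" by (cases z)
  then show "tens_mul mul (ptens x y) (bas z) = lin (\<lambda>(p, q). ptens (mul x (bas p)) (mul y (bas q))) (bas z)"
    using tens_mul_ptens[OF assms, of x y "bas a" "bas b"] by simp
qed simp_all

lemma tens_mul_ptens_left:
  assumes "\<And>q. k_linear (\<lambda>p. mul p q)" "\<And>p. k_linear (mul p)"
  shows "tens_mul mul W (ptens x y) = lin (\<lambda>(p, q). ptens (mul (bas p) x) (mul (bas q) y)) W"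
proof (rule k_linear_eqI[of "\<lambda>W. tens_mul mul W (ptens x y)"])
  fix z :: "'a \<times> 'a"
  obtain a b where "z = (a, b)" by (cases z)
  then show "tens_mul mul (bas z) (ptens x y) = lin (\<lambda>(p, q). ptens (mul (bas p) x) (mul (bas q) y)) (bas z)"
    using tens_mul_ptens[OF assms, of "bas a" "bas b" x y] by simp
qed simp_all

lemma lin_ptens:
  assumes "\<And>Y. k_linear (\<lambda>X. G X Y)" "\<And>X. k_linear (G X)"
  shows "lin (\<lambda>(a, b). G (bas a) (bas b)) (ptens X Y) = G X Y"
proof (rule k_bilinear_eqI[of "\<lambda>X Y. lin (\<lambda>(a, b). G (bas a) (bas b)) (ptens X Y)"])
  show "k_linear (\<lambda>X. lin (\<lambda>(a, b). G (bas a) (bas b)) (ptens X Y))" for Y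
    using k_linear_comp[OF k_linear_lin k_linear_ptens1] by blast
  show "k_linear (\<lambda>Y. lin (\<lambda>(a, b). G (bas a) (bas b)) (ptens X Y))" for X
    using k_linear_comp[OF k_linear_lin k_linear_ptens2] by blast
qed (use assms in simp_all)

definition ptens_ker :: "('a \<Rightarrow>\<^sub>0 'k::comm_ring_1) set \<Rightarrow> ('b \<Rightarrow>\<^sub>0 'k) set \<Rightarrow> ('a \<times> 'b \<Rightarrow>\<^sub>0 'k) set"
  where "ptens_ker N M = kspan ({ptens x y | x y. x \<in> N} \<union> {ptens x y | x y. y \<in> M})"

lemma ptens_ker_ptens1: "x \<in> N \<Longrightarrow> ptens x y \<in> ptens_ker N M"
  and ptens_ker_ptens2: "y \<in> M \<Longrightarrow> ptens x y \<in> ptens_ker N M"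
  unfolding ptens_ker_def by (rule kspan_gen, blast)+

interpretation ptens_ker: ksubmodule "ptens_ker N M" for N M
  unfolding ptens_ker_def by (rule ksubmodule_kspan)

lemma (in ksubmodule) image_ptens_ker:
  assumes "Z \<in> ptens_ker A B" "k_linear F"
    "\<And>x y. x \<in> A \<Longrightarrow> F (ptens x y) \<in> N" "\<And>x y. y \<in> B
      \<Longrightarrow> F (ptens x y) \<in> N"
  shows "F Z \<in> N"
  using assms(1)[unfolded ptens_ker_def] assms(2) by (rule image_kspan) (auto intro: assms(3,4))

lemma ptens_ker_tens_mul:
  assumes mul: "\<And>q. k_linear (\<lambda>p. mul p q)" "\<And>p. k_linear (mul p)"
    and ideals: "\<And>x y. x \<in> N \<Longrightarrow> mul x y \<in> N" "\<And>x y. x \<in> N \<Longrightarrow> mul y x \<in> N"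
      "\<And>x y. x \<in> M \<Longrightarrow> mul x y \<in> M" "\<And>x y. x \<in> M \<Longrightarrow> mul y x \<in> M"
    and Z: "Z \<in> ptens_ker N M"
  shows "tens_mul mul Z W \<in> ptens_ker N M" "tens_mul mul W Z \<in> ptens_ker N M"
proof -
  have right: "tens_mul mul (ptens x y) W \<in> ptens_ker N M" if "x \<in> N \<or> y \<in> M" for x y
    unfolding tens_mul_ptens_right[OF mul]
    by (rule ptens_ker.lin) (use that in \<open>auto split: prod.split intro: ptens_ker_ptens1 ptens_ker_ptens2 ideals\<close>)
  have left: "tens_mul mul W (ptens x y) \<in> ptens_ker N M" if "x \<in> N \<or> y \<in> M" for x y
    unfolding tens_mul_ptens_left[OF mul]
    by (rule ptens_ker.lin) (use that in \<open>auto split: prod.split intro: ptens_ker_ptens1 ptens_ker_ptens2 ideals\<close>)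
  show "tens_mul mul Z W \<in> ptens_ker N M" "tens_mul mul W Z \<in> ptens_ker N M"
    using Z by (rule ptens_ker.image_ptens_ker; simp add: right left)+
qed

section \<open>The coproduct of A(R) on words\<close>

lemma sum_rot3:
  "(\<Sum>a\<in>A. \<Sum>b\<in>B. \<Sum>c\<in>C. f a b c) = (\<Sum>c\<in>C. \<Sum>a\<in>A. \<Sum>b\<in>B. f a b c)"
  by (simp only: sum.swap[of _ B C] sum.swap[of _ A C])

lemma sum_rot3': "(\<Sum>c\<in>C. \<Sum>a\<in>A. \<Sum>b\<in>B. f a b c)
  = (\<Sum>a\<in>A. \<Sum>b\<in>B. \<Sum>c\<in>C. f a b c)"
  by (rule sum_rot3[symmetric])

lemma sum_rev3:
  "(\<Sum>a\<in>A. \<Sum>b\<in>B. \<Sum>c\<in>C. f a b c) = (\<Sum>c\<in>C. \<Sum>b\<in>B. \<Sum>a\<in>A. f a b c)"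
  by (subst sum_rot3) (rule sum.cong[OF refl], rule sum.swap)

definition idx_lists :: "nat \<Rightarrow> 'n list set"
  where "idx_lists m = {L. length L = m}"

lemma finite_idx_lists[simp]: "finite (idx_lists m :: ('n::finite) list set)"
  using finite_lists_length_eq[of "UNIV::'n set" m] by (simp add: idx_lists_def)

lemma idx_lists_0[simp]: "idx_lists 0 = {[]}" by (auto simp: idx_lists_def)

lemma sum_idx_lists_Suc:
  "(\<Sum>L\<in>idx_lists (Suc m). f L) = (\<Sum>l\<in>(UNIV::'n::finite set). \<Sum>L\<in>idx_lists m. f (l # L))"
proof -
  have e: "idx_lists (Suc m) = (\<lambda>(l, L). l # L) ` (UNIV \<times> idx_lists m)"
    by (auto simp: idx_lists_def image_iff length_Suc_conv)
  have i: "inj_on (\<lambda>(l, L). l # L) (UNIV \<times> (idx_lists m :: 'n list set))"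
    by (auto simp: inj_on_def)
  show ?thesis
    by (subst e, subst sum.reindex[OF i]) (simp add: sum.cartesian_product split_def)
qed

lemma sum_idx_lists_add:
  "(\<Sum>L\<in>idx_lists (m + k). f L) = (\<Sum>L1\<in>(idx_lists m :: ('n::finite) list set). \<Sum>L2\<in>idx_lists k. f (L1 @ L2))"
proof (induct m arbitrary: f)
  case 0
  then show ?case by simp
next
  case (Suc m)
  have "(\<Sum>L\<in>idx_lists (Suc m + k). f L) = (\<Sum>l\<in>UNIV. \<Sum>L\<in>idx_lists (m + k). f (l # L))"
    by (simp add: sum_idx_lists_Suc)
  also have "\<dots> = (\<Sum>l\<in>UNIV. \<Sum>L1\<in>idx_lists m. \<Sum>L2\<in>idx_lists k. f (l # L1 @ L2))"
    using Suc by simp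
  also have "\<dots> = (\<Sum>L1\<in>idx_lists (Suc m). \<Sum>L2\<in>idx_lists k. f (L1 @ L2))"
    by (simp add: sum_idx_lists_Suc)
  finally show ?case .
qed

(* For w = c^{i_1}_{j_1} ... c^{i_m}_{j_m} and L = [l_1, ..., l_m], zip_fst w L is the word
   c^{i_1}_{l_1} ... c^{i_m}_{l_m} and zip_snd L w is c^{l_1}_{j_1} ... c^{l_m}_{j_m}, so that
   dA w is the sum over all L of zip_fst w L \<otimes> zip_snd L w (dA_explicit). *)
definition zip_fst :: "('a \<times> 'b) list \<Rightarrow> 'c list \<Rightarrow> ('a \<times> 'c) list"
  where "zip_fst w L = zip (map fst w) L"
definition zip_snd :: "'c list \<Rightarrow> ('a \<times> 'b) list \<Rightarrow> ('c \<times> 'b) list"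
  where "zip_snd L w = zip L (map snd w)"

lemma zip_fst_simps[simp]:
  "zip_fst [] L = []" "zip_fst w [] = []" "zip_fst (g # w) (l # L) = (fst g, l) # zip_fst w L"
  by (simp_all add: zip_fst_def)
lemma zip_snd_simps[simp]:
  "zip_snd L [] = []" "zip_snd [] w = []" "zip_snd (l # L) (g # w) = (l, snd g) # zip_snd L w"
  by (simp_all add: zip_snd_def)

lemma length_zip_fst[simp]: "length L = length w \<Longrightarrow> length (zip_fst w L) = length w"
  by (simp add: zip_fst_def)
lemma length_zip_snd[simp]: "length L = length w \<Longrightarrow> length (zip_snd L w) = length w"
  by (simp add: zip_snd_def)

lemma zip_fst_append:
  "length L = length w \<Longrightarrow> zip_fst (w @ w') (L @ L') = zip_fst w L @ zip_fst w' L'"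
  by (simp add: zip_fst_def)
lemma zip_snd_append:
  "length L = length w \<Longrightarrow> zip_snd (L @ L') (w @ w') = zip_snd L w @ zip_snd L' w'"
  by (simp add: zip_snd_def)

lemma zip_fst_zip_fst:
  "length L = length w \<Longrightarrow> length M = length w \<Longrightarrow> zip_fst (zip_fst w L) M = zip_fst w M"
  by (simp add: zip_fst_def)
lemma zip_snd_zip_fst:
  "length L = length w \<Longrightarrow> length M = length w \<Longrightarrow> zip_snd M (zip_fst w L) = zip M L"
  by (simp add: zip_fst_def zip_snd_def)
lemma zip_fst_zip_snd:
  "length L = length w \<Longrightarrow> length M = length w \<Longrightarrow> zip_fst (zip_snd M w) L = zip M L"
  by (simp add: zip_fst_def zip_snd_def)
lemma zip_snd_zip_snd:
  "length L = length w \<Longrightarrow> length M = length w \<Longrightarrow> zip_snd L (zip_snd M w) = zip_snd L w"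
  by (simp add: zip_snd_def)

lemma dA_explicit: "dA w = (\<Sum>L\<in>idx_lists (length w). bas (zip_fst w L, zip_snd L w))"
proof (induct w)
  case Nil
  then show ?case by simp
next
  case (Cons g w)
  show ?case
    by (simp add: Cons lin_sum sum_idx_lists_Suc)
qed

lemma lin_dA: "lin f (dA w) = (\<Sum>L\<in>idx_lists (length w). f (zip_fst w L, zip_snd L w))"
  by (simp add: dA_explicit lin_sum)

definition counit_word :: "('n \<times> 'n) list \<Rightarrow> 'k::comm_ring_1" where
  "counit_word w = prod_list (map (\<lambda>g. if fst g = snd g then 1 else 0) w)"

lemma counit_word_simps[simp]:
  "counit_word [] = 1" "counit_word (g # w) = (if fst g = snd g then counit_word w else 0)"
  by (simp_all add: counit_word_def)

lemma counit_word_append: "counit_word (w @ w') = counit_word w * counit_word w'"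
  by (simp add: counit_word_def)

section \<open>The action of A(R) on S_R(n)\<close>

lemma acg_single: "acg R (j, v) [u] = (\<Sum>i\<in>UNIV. psmult (R i j u v) (fgen i))"
proof -
  have "acg R (j, v) [u] = (\<Sum>l\<in>UNIV. \<Sum>i\<in>UNIV. psmult (R i j u l) (if l = v then fgen i else 0))"
    by (simp add: if_distrib cong: if_cong)
  also have "\<dots> = (\<Sum>i\<in>UNIV. psmult (R i j u v) (fgen i))"
    by (simp add: if_distrib[of "psmult _"] sum.swap[of _ UNIV UNIV] cong: if_cong)
  finally show ?thesis .
qed

lemma acg_append: "acg R g (x @ y) = (\<Sum>l\<in>UNIV. fmul (acg R (fst g, l) x) (acg R (l, snd g) y))"
proof (induct x arbitrary: g)
  case Nil
  obtain a b where g: "g = (a, b)" by (cases g)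
  have e: "fmul (if a = l then fone else 0) q = (if a = l then q else 0)" for l and q :: "'a list \<Rightarrow>\<^sub>0 'b"
    by simp
  have "(\<Sum>l\<in>UNIV. fmul (if a = l then fone else 0) (acg R (l, b) y)) = acg R (a, b) y"
    by (simp add: e sum.delta')
  then show ?case by (simp add: g)
next
  case (Cons u x)
  have "acg R g ((u # x) @ y) = (\<Sum>l\<in>UNIV. \<Sum>i\<in>UNIV. psmult (R i (fst g) u l)
      (fmul (fgen i) (\<Sum>m\<in>UNIV. fmul (acg R (l, m) x) (acg R (m, snd g) y))))"
    using Cons[of "(_, snd g)"] by simp
  also have "\<dots> = (\<Sum>m\<in>UNIV. \<Sum>l\<in>UNIV. \<Sum>i\<in>UNIV. psmult (R i (fst g) u l)
      (fmul (fmul (fgen i) (acg R (l, m) x)) (acg R (m, snd g) y)))"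
    unfolding fmul_sum2 pm.scale_sum_right fmul_assoc by (rule sum_rot3)
  also have "\<dots> = (\<Sum>m\<in>UNIV. fmul (acg R (fst g, m) (u # x)) (acg R (m, snd g) y))"
    by (simp add: fmul_sum1 fmul_psmult1)
  finally show ?case .
qed

lemma lin_acg_fmul: "lin (acg R g) (fmul p q) =
    (\<Sum>l\<in>UNIV. fmul (lin (acg R (fst g, l)) p) (lin (acg R (l, snd g)) q))"
  by (rule k_bilinear_eqI[of "\<lambda>p q. lin (acg R g) (fmul p q)"])
     (simp_all add: k_linear_def lin_add lin_psmult fmul_lin sum.distrib pm.scale_sum_right acg_append)

lemma k_linear_act[simp]: "k_linear (act R w)"
  by (induct w) (auto intro: k_linear_comp)

lemma act_add: "act R w (p + q) = act R w p + act R w q"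
  and act_psmult: "act R w (psmult c p) = psmult c (act R w p)"
  using k_linear_act[of R w] unfolding k_linear_def by auto

lemma act_diff: "act R w (p - q) = act R w p - act R w q"
  and act_sum: "act R w (sum f A) = (\<Sum>a\<in>A. act R w (f a))"
  and act_zero[simp]: "act R w 0 = 0"
  using k_linear_minus[OF k_linear_act] k_linear_sum[OF k_linear_act] k_linear_zero[OF k_linear_act] by auto

lemmas act_lin = act_add act_psmult act_diff act_sum

lemma act_append: "act R (w @ w') p = act R w (act R w' p)"
  by (induct w) auto

lemma act_fmul: "act R w (fmul p q) =
   (\<Sum>L\<in>idx_lists (length w). fmul (act R (zip_fst w L) p) (act R (zip_snd L w) q))"
proof (induct w arbitrary: p q)
  case Nil
  then show ?case by simp
next
  case (Cons g w)
  have "act R (g # w) (fmul p q) =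
     (\<Sum>L\<in>idx_lists (length w). \<Sum>l\<in>UNIV. fmul (lin (acg R (fst g, l)) (act R (zip_fst w L) p))
        (lin (acg R (l, snd g)) (act R (zip_snd L w) q)))"
    by (simp add: Cons lin_sum lin_acg_fmul)
  also have "\<dots> = (\<Sum>L\<in>idx_lists (length (g # w)). fmul (act R (zip_fst (g # w) L) p) (act R (zip_snd L (g # w)) q))"
    by (simp add: sum_idx_lists_Suc sum.swap[of _ UNIV])
  finally show ?case .
qed

lemma act_fone: "act R w fone = psmult (counit_word w) fone"
proof (induct w)
  case Nil
  then show ?case by simp
next
  case (Cons g w)
  then show ?case
    by (simp add: lin_psmult) (simp add: fone_def)
qed

section \<open>The smash product\<close>

definition smash_tens :: "('n, 'k::comm_ring_1) free_S \<Rightarrow> ('n \<times> 'n) list \<Rightarrow> ('n, 'k) free_H"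
  where "smash_tens p w = ptens p (bas w)"

lemma smash_tens_bas[simp]: "smash_tens (bas x) w = bas (x, w)" by (simp add: smash_tens_def)

lemma smash_tens_add: "smash_tens (p + q) w = smash_tens p w + smash_tens q w"
  and smash_tens_psmult: "smash_tens (psmult c p) w = psmult c (smash_tens p w)"
  and smash_tens_diff: "smash_tens (p - q) w = smash_tens p w - smash_tens q w"
  and smash_tens_sum: "smash_tens (sum f A) w = (\<Sum>a\<in>A. smash_tens (f a) w)"
  and smash_tens_zero[simp]: "smash_tens 0 w = 0"
  by (simp_all add: smash_tens_def ptens_lin)

lemmas smash_tens_lin = smash_tens_add smash_tens_psmult smash_tens_diff smash_tens_sum

lemma k_linear_smash_tens[simp]: "k_linear (\<lambda>p. smash_tens p w)" by (simp add: k_linear_def smash_tens_lin)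

lemma smash_add1: "smash_mul R (p + p') q = smash_mul R p q + smash_mul R p' q"
  and smash_add2: "smash_mul R p (q + q') = smash_mul R p q + smash_mul R p q'"
  and smash_psmult1: "smash_mul R (psmult c p) q = psmult c (smash_mul R p q)"
  and smash_psmult2: "smash_mul R p (psmult c q) = psmult c (smash_mul R p q)"
  by (simp_all add: smash_mul_def bilin_add1 bilin_add2 bilin_psmult1 bilin_psmult2)

lemma k_linear_smash1[simp]:
  "k_linear (\<lambda>p. smash_mul R p q)" and k_linear_smash2[simp]: "k_linear (smash_mul R p)"
  by (simp_all add: k_linear_def smash_add1 smash_add2 smash_psmult1 smash_psmult2)

lemma smash_diff1: "smash_mul R (p - p') q = smash_mul R p q - smash_mul R p' q"
  and smash_diff2: "smash_mul R p (q - q') = smash_mul R p q - smash_mul R p q'"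
  and smash_sum1: "smash_mul R (sum g A) q = (\<Sum>a\<in>A. smash_mul R (g a) q)"
  and smash_sum2: "smash_mul R p (sum g A) = (\<Sum>a\<in>A. smash_mul R p (g a))"
  and smash_zero1[simp]: "smash_mul R 0 q = 0"
  and smash_zero2[simp]: "smash_mul R p 0 = 0"
  using k_linear_minus[OF k_linear_smash1[of R q]] k_linear_minus[OF k_linear_smash2[of R p]]
    k_linear_sum[OF k_linear_smash1[of R q]] k_linear_sum[OF k_linear_smash2[of R p]]
    k_linear_zero[OF k_linear_smash1[of R q]] k_linear_zero[OF k_linear_smash2[of R p]]
  by auto

lemmas smash_lin = smash_add1 smash_add2 smash_psmult1 smash_psmult2 smash_diff1 smash_diff2 smash_sum1 smash_sum2

lemma smash_mul_bas: "smash_mul R (bas (x, w)) (bas (y, w')) =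
   (\<Sum>L\<in>idx_lists (length w). smash_tens (fmul (bas x) (act R (zip_fst w L) (bas y))) (zip_snd L w @ w'))"
  by (simp add: smash_mul_def lin_dA smash_tens_def)

lemma smash_mul_smash_tens: "smash_mul R (smash_tens p w) (smash_tens q w') =
   (\<Sum>L\<in>idx_lists (length w). smash_tens (fmul p (act R (zip_fst w L) q)) (zip_snd L w @ w'))"
proof (rule k_bilinear_eqI[of "\<lambda>p q. smash_mul R (smash_tens p w) (smash_tens q w')"])
  show "\<And>x y. smash_mul R (smash_tens (bas x) w) (smash_tens (bas y) w') =
     (\<Sum>L\<in>idx_lists (length w). smash_tens (fmul (bas x) (act R (zip_fst w L) (bas y))) (zip_snd L w @ w'))"
    by (simp add: smash_mul_bas)
qed (simp_all add: k_linear_def smash_tens_lin smash_lin fmul_lin act_lin sum.distrib pm.scale_sum_right)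

lemma sum_if_const: "(\<Sum>x\<in>A. if P then f x else 0) = (if P then sum f A else 0)"
  by simp

lemma dA_counit_fst: fixes w :: "('n::finite \<times> 'n) list"
  shows "(\<Sum>L\<in>(idx_lists (length w) :: 'n list set). psmult (counit_word (zip_fst w L)) (bas (zip_snd L w))) = (bas w :: _ \<Rightarrow>\<^sub>0 'k::comm_ring_1)"
proof (induct w)
  case Nil
  then show ?case by simp
next
  case (Cons g w)
  have "(\<Sum>L\<in>(idx_lists (length (g # w)) :: 'n list set). psmult (counit_word (zip_fst (g # w) L)) (bas (zip_snd L (g # w))) :: _ \<Rightarrow>\<^sub>0 'k)
     = (\<Sum>l\<in>UNIV. \<Sum>L\<in>idx_lists (length w).
       if fst g = l then psmult (counit_word (zip_fst w L)) (bas ((l, snd g) # zip_snd L w)) else 0)"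
    by (simp add: sum_idx_lists_Suc if_distrib[of "\<lambda>c. psmult c _"] cong: if_cong)
  also have "\<dots> = (\<Sum>L\<in>idx_lists (length w). psmult (counit_word (zip_fst w L)) (bas ((fst g, snd g) # zip_snd L w)))"
    by (simp only: sum_if_const sum.delta' finite UNIV_I if_True)
  also have "\<dots> = lin (\<lambda>q. bas (g # q)) (\<Sum>L\<in>idx_lists (length w). psmult (counit_word (zip_fst w L)) (bas (zip_snd L w)) :: _ \<Rightarrow>\<^sub>0 'k)"
    by (simp add: lin_sum lin_psmult)
  also have "\<dots> = bas (g # w)" by (simp add: Cons)
  finally show ?case .
qed

lemma dA_counit_snd: fixes w :: "('n::finite \<times> 'n) list"
  shows "(\<Sum>L\<in>(idx_lists (length w) :: 'n list set). psmult (counit_word (zip_snd L w)) (bas (zip_fst w L))) = (bas w :: _ \<Rightarrow>\<^sub>0 'k::comm_ring_1)"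
proof (induct w)
  case Nil
  then show ?case by simp
next
  case (Cons g w)
  have "(\<Sum>L\<in>(idx_lists (length (g # w)) :: 'n list set). psmult (counit_word (zip_snd L (g # w))) (bas (zip_fst (g # w) L)) :: _ \<Rightarrow>\<^sub>0 'k)
     = (\<Sum>l\<in>UNIV. \<Sum>L\<in>idx_lists (length w).
       if l = snd g then psmult (counit_word (zip_snd L w)) (bas ((fst g, l) # zip_fst w L)) else 0)"
    by (simp add: sum_idx_lists_Suc if_distrib[of "\<lambda>c. psmult c _"] cong: if_cong)
  also have "\<dots> = (\<Sum>L\<in>idx_lists (length w). psmult (counit_word (zip_snd L w)) (bas ((fst g, snd g) # zip_fst w L)))"
    by (simp only: sum_if_const sum.delta finite UNIV_I if_True)
  also have "\<dots> = lin (\<lambda>q. bas (g # q)) (\<Sum>L\<in>idx_lists (length w). psmult (counit_word (zip_snd L w)) (bas (zip_fst w L)) :: _ \<Rightarrow>\<^sub>0 'k)"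
    by (simp add: lin_sum lin_psmult)
  also have "\<dots> = bas (g # w)" by (simp add: Cons)
  finally show ?case .
qed

lemma smash_one_smash_tens: "smash_one = smash_tens fone []"
  by (simp add: smash_one_def fone_def)

lemma smash_one_left[simp]: "smash_mul R smash_one h = h"
proof (rule k_linear_eqI[of "smash_mul R smash_one" "\<lambda>h. h"])
  fix z :: "'a list \<times> ('a \<times> 'a) list"
  obtain y w where z: "z = (y, w)" by (cases z)
  show "smash_mul R smash_one (bas z) = bas z"
    by (simp add: z smash_one_def smash_mul_bas)
qed simp_all

lemma smash_one_right[simp]: "smash_mul R h smash_one = h"
proof (rule k_linear_eqI[of "\<lambda>h. smash_mul R h smash_one" "\<lambda>h. h"])
  fix z :: "'a list \<times> ('a \<times> 'a) list"
  obtain y w where z: "z = (y, w)" by (cases z)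
  have "smash_mul R (bas z) smash_one = (\<Sum>L\<in>idx_lists (length w). smash_tens (psmult (counit_word (zip_fst w L)) (bas y)) (zip_snd L w))"
    using act_fone[of R, unfolded fone_def] by (simp add: z smash_one_def smash_mul_bas fmul_psmult2)
  also have "\<dots> = ptens (bas y) (\<Sum>L\<in>idx_lists (length w). psmult (counit_word (zip_fst w L)) (bas (zip_snd L w)))"
    by (simp add: smash_tens_def ptens_lin)
  also have "\<dots> = bas z" by (simp add: dA_counit_fst z)
  finally show "smash_mul R (bas z) smash_one = bas z" .
qed simp_all

lemma smash_mul_assoc_left_expand:
  fixes R :: "('n::finite, 'k::comm_ring_1) rmatrix" and w w' w'' :: "('n \<times> 'n) list"
  shows "smash_mul R (smash_mul R (bas (x, w)) (bas (y, w'))) (bas (z, w'')) =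
    (\<Sum>L\<in>idx_lists (length w). \<Sum>M1\<in>idx_lists (length w). \<Sum>M2\<in>idx_lists (length w').
       smash_tens (fmul (bas x) (fmul (act R (zip_fst w L) (bas y)) (act R (zip L M1) (act R (zip_fst w' M2) (bas z)))))
         (zip_snd M1 w @ zip_snd M2 w' @ w''))"
  unfolding smash_mul_bas smash_sum1
proof (rule sum.cong[OF refl])
  fix L :: "'n list" assume L: "L \<in> idx_lists (length w)"
  then have len: "length (zip_snd L w @ w') = length w + length w'" by (simp add: idx_lists_def)
  show "smash_mul R (smash_tens (fmul (bas x) (act R (zip_fst w L) (bas y))) (zip_snd L w @ w')) (bas (z, w'')) =
    (\<Sum>M1\<in>idx_lists (length w). \<Sum>M2\<in>idx_lists (length w').
       smash_tens (fmul (bas x) (fmul (act R (zip_fst w L) (bas y)) (act R (zip L M1) (act R (zip_fst w' M2) (bas z)))))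
         (zip_snd M1 w @ zip_snd M2 w' @ w''))"
    unfolding smash_tens_bas[symmetric] smash_mul_smash_tens len sum_idx_lists_add fmul_assoc
    by (rule sum.cong[OF refl], rule sum.cong[OF refl]) (use L in \<open>simp add: idx_lists_def
        zip_fst_append zip_snd_append act_append zip_fst_zip_snd zip_snd_zip_snd\<close>)
qed

lemma smash_mul_assoc_right_expand:
  fixes R :: "('n::finite, 'k::comm_ring_1) rmatrix" and w w' w'' :: "('n \<times> 'n) list"
  shows "smash_mul R (bas (x, w)) (smash_mul R (bas (y, w')) (bas (z, w''))) =
    (\<Sum>M2\<in>idx_lists (length w'). \<Sum>M1\<in>idx_lists (length w). \<Sum>L\<in>idx_lists (length w).
       smash_tens (fmul (bas x) (fmul (act R (zip_fst w L) (bas y)) (act R (zip L M1) (act R (zip_fst w' M2) (bas z)))))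
         (zip_snd M1 w @ zip_snd M2 w' @ w''))"
  unfolding smash_mul_bas smash_sum2 smash_tens_bas[symmetric] smash_mul_smash_tens act_fmul fmul_sum2 smash_tens_sum
  by (rule sum.cong[OF refl], rule sum.cong[OF refl], rule sum.cong)
     (auto simp: idx_lists_def zip_fst_zip_fst zip_snd_zip_fst)

lemma smash_assoc: "smash_mul R (smash_mul R X Y) Z = smash_mul R X (smash_mul R Y Z)"
proof (rule k_trilinear_eqI[of "\<lambda>X Y Z. smash_mul R (smash_mul R X Y) Z" "\<lambda>X Y Z. smash_mul R X (smash_mul R Y Z)"])
  fix a b c :: "'a list \<times> ('a \<times> 'a) list"
  obtain x w y w' z w'' where "a = (x, w)" "b = (y, w')" "c = (z, w'')" by (metis prod.exhaust)
  then show "smash_mul R (smash_mul R (bas a) (bas b)) (bas c) = smash_mul R (bas a) (smash_mul R (bas b) (bas c))"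
    by (simp only: smash_mul_assoc_left_expand smash_mul_assoc_right_expand sum_rev3[of _ "idx_lists (length w)"])
qed (simp_all add: k_linear_def smash_lin)

section \<open>Compatibility of the action with the relations\<close>

definition SR_relator :: "('n::finite, 'k::comm_ring_1) rmatrix \<Rightarrow> 'n \<Rightarrow> 'n \<Rightarrow> ('n, 'k) free_S"
  where "SR_relator R u v = bas [u, v] - (\<Sum>i\<in>UNIV. \<Sum>l\<in>UNIV. psmult (R l i u v) (bas [i, l]))"

lemma SR_relator_expand:
  "bas [m, l] - SR_relator R m l = (\<Sum>u\<in>UNIV. \<Sum>p\<in>UNIV. psmult (R p u m l) (bas [u, p]))"
  by (simp add: SR_relator_def)

lemma SR_rel_eq: "SR_rel R = {SR_relator R u v | u v. True}"
  by (simp add: SR_rel_def SR_relator_def fgen_fgen)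

lemma SR_relator_in: "SR_relator R u v \<in> SR_ker R"
  unfolding SR_ker_def by (rule fideal_rel) (auto simp: SR_rel_eq)

lemma SR_ker_mul:
  "x \<in> SR_ker R \<Longrightarrow> fmul x y \<in> SR_ker R"
  "x \<in> SR_ker R \<Longrightarrow> fmul y x \<in> SR_ker R"
  unfolding SR_ker_def by (auto intro: fideal_mul)

interpretation SR_ker: ksubmodule "SR_ker R" for R
  unfolding SR_ker_def fideal_def by (rule ksubmodule_kspan)

definition AR_relator ::
    "('n::finite, 'k::comm_ring_1) rmatrix \<Rightarrow> 'n \<Rightarrow> 'n \<Rightarrow> 'n \<Rightarrow> 'n \<Rightarrow> ('n, 'k) free_A"
  where "AR_relator R i j k l = (\<Sum>u\<in>UNIV. \<Sum>v\<in>UNIV. psmult (R i j v u) (bas [(u, k), (v, l)]))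
       - (\<Sum>u\<in>UNIV. \<Sum>v\<in>UNIV. psmult (R v u l k) (bas [(i, v), (j, u)]))"

lemma AR_rel_eq: "AR_rel R = {AR_relator R i j k l | i j k l. True}"
  by (simp add: AR_rel_def AR_relator_def fgen_fgen)

lemma AR_relator_in: "AR_relator R i j k l \<in> AR_ker R"
  unfolding AR_ker_def by (rule fideal_rel) (auto simp: AR_rel_eq)

lemma AR_ker_mul:
  "x \<in> AR_ker R \<Longrightarrow> fmul x y \<in> AR_ker R"
  "x \<in> AR_ker R \<Longrightarrow> fmul y x \<in> AR_ker R"
  unfolding AR_ker_def by (auto intro: fideal_mul)

lemma psmult_collect2:
  "(\<Sum>i\<in>A. \<Sum>l\<in>B. psmult (c i l) (\<Sum>p\<in>P. \<Sum>q\<in>Q. psmult (d i l p q) (f p q)))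
   = (\<Sum>p\<in>P. \<Sum>q\<in>Q. psmult (\<Sum>i\<in>A. \<Sum>l\<in>B. c i l * d i l p q) (f p q))"
proof -
  have "(\<Sum>i\<in>A. \<Sum>l\<in>B. psmult (c i l) (\<Sum>p\<in>P. \<Sum>q\<in>Q. psmult (d i l p q) (f p q)))
     = (\<Sum>i\<in>A. \<Sum>l\<in>B. \<Sum>p\<in>P. \<Sum>q\<in>Q. psmult (c i l * d i l p q) (f p q))"
    by (simp add: pm.scale_sum_right)
  also have "\<dots> = (\<Sum>i\<in>A. \<Sum>p\<in>P. \<Sum>q\<in>Q. \<Sum>l\<in>B. psmult (c i l * d i l p q) (f p q))"
    by (rule sum.cong[OF refl]) (rule sum_rot3')
  also have "\<dots> = (\<Sum>p\<in>P. \<Sum>q\<in>Q. \<Sum>i\<in>A. \<Sum>l\<in>B. psmult (c i l * d i l p q) (f p q))"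
    by (simp only: sum.swap[of _ A Q] sum.swap[of _ A P])
  also have "\<dots> = (\<Sum>p\<in>P. \<Sum>q\<in>Q. psmult (\<Sum>i\<in>A. \<Sum>l\<in>B. c i l * d i l p q) (f p q))"
    by (simp add: pm.scale_sum_left)
  finally show ?thesis .
qed

definition act2_coeff ::
    "('n::finite, 'k::comm_ring_1) rmatrix \<Rightarrow> 'n \<Rightarrow> 'n \<Rightarrow> 'n \<Rightarrow> 'n \<Rightarrow> 'n \<Rightarrow> 'n \<Rightarrow> 'k"
  where "act2_coeff R j v u x p q = (\<Sum>l\<in>UNIV. R p j u l * R q l x v)"

lemma acg_two:
  "acg R (j, v) [u, x] = (\<Sum>p\<in>UNIV. \<Sum>q\<in>UNIV. psmult (act2_coeff R j v u x p q) (bas [p, q]))"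
proof -
  have "acg R (j, v) [u, x] = (\<Sum>l\<in>UNIV. \<Sum>p\<in>UNIV. psmult (R p j u l)
      (fmul (fgen p) (\<Sum>q\<in>UNIV. psmult (R q l x v) (fgen q))))"
    by (subst acg.simps(2)) (simp del: acg.simps add: acg_single)
  also have "\<dots> = (\<Sum>l\<in>UNIV. \<Sum>p\<in>UNIV. \<Sum>q\<in>UNIV. psmult (R p j u l * R q l x v) (bas [p, q]))"
    by (simp add: fmul_sum2 fmul_psmult2 pm.scale_sum_right fgen_fgen)
  also have "\<dots> = (\<Sum>p\<in>UNIV. \<Sum>q\<in>UNIV. psmult (act2_coeff R j v u x p q) (bas [p, q]))"
    by (subst sum_rot3') (simp only: act2_coeff_def pm.scale_sum_left)
  finally show ?thesis .
qed

lemma QYBE_D: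
  assumes "QYBE R"
  shows "(\<Sum>i\<in>UNIV. \<Sum>j\<in>UNIV. \<Sum>k\<in>UNIV. R x y i j * R i z a k * R j k b c)
   = (\<Sum>i\<in>UNIV. \<Sum>j\<in>UNIV. \<Sum>k\<in>UNIV. R i j a b * R x k i c * R y z j k)"
  using assms unfolding QYBE_def by blast

lemma act2_coeff_QYBE:
  assumes "QYBE R"
  shows "(\<Sum>i\<in>UNIV. \<Sum>l\<in>UNIV. R l i u x * act2_coeff R j v i l a b) =
    (\<Sum>p\<in>UNIV. \<Sum>q\<in>UNIV. act2_coeff R j v u x p q * R b a p q)"
proof -
  have "(\<Sum>i\<in>UNIV. \<Sum>l\<in>UNIV. R l i u x * act2_coeff R j v i l a b)
     = (\<Sum>l\<in>UNIV. \<Sum>i\<in>UNIV. \<Sum>m\<in>UNIV. R l i u x * R b m l v * R a j i m)"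
    by (subst sum.swap) (simp add: act2_coeff_def sum_distrib_left ac_simps)
  also have "\<dots> = (\<Sum>p\<in>UNIV. \<Sum>q\<in>UNIV. \<Sum>m\<in>UNIV. R b a p q * R p j u m * R q m x v)"
    using QYBE_D[OF assms, of b a j u x v] by simp
  also have "\<dots> = (\<Sum>p\<in>UNIV. \<Sum>q\<in>UNIV. act2_coeff R j v u x p q * R b a p q)"
    by (simp add: act2_coeff_def sum_distrib_right sum_distrib_left ac_simps)
  finally show ?thesis .
qed

lemma acg_SR_relator:
  assumes "QYBE R"
  shows "lin (acg R (j, v)) (SR_relator R u x) = (\<Sum>p\<in>UNIV. \<Sum>q\<in>UNIV. psmult (act2_coeff R j v u x p q) (SR_relator R p q))"
proof -
  have "lin (acg R (j, v)) (SR_relator R u x) = (\<Sum>p\<in>UNIV. \<Sum>q\<in>UNIV. psmult (act2_coeff R j v u x p q) (bas [p, q]))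
     - (\<Sum>i\<in>UNIV. \<Sum>l\<in>UNIV. psmult (R l i u x) (\<Sum>p\<in>UNIV. \<Sum>q\<in>UNIV. psmult (act2_coeff R j v i l p q) (bas [p, q])))"
    by (simp del: acg.simps add: SR_relator_def lin_diff lin_sum lin_psmult acg_two)
  also have "\<dots> = (\<Sum>p\<in>UNIV. \<Sum>q\<in>UNIV. psmult (act2_coeff R j v u x p q) (bas [p, q]))
     - (\<Sum>p\<in>UNIV. \<Sum>q\<in>UNIV. psmult (act2_coeff R j v u x p q) (\<Sum>i\<in>UNIV. \<Sum>l\<in>UNIV. psmult (R l i p q) (bas [i, l])))"
    by (simp only: psmult_collect2 act2_coeff_QYBE[OF assms])
  also have "\<dots> = (\<Sum>p\<in>UNIV. \<Sum>q\<in>UNIV. psmult (act2_coeff R j v u x p q) (SR_relator R p q))"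
    by (simp add: SR_relator_def pm.scale_right_diff_distrib sum_subtractf)
  finally show ?thesis .
qed

lemma acg_SR:
  assumes Q: "QYBE R" and x: "x \<in> SR_ker R"
  shows "lin (acg R g) x \<in> SR_ker R"
proof -
  have rel: "lin (acg R h) r \<in> SR_ker R" if "r \<in> SR_rel R" for h r
  proof -
    from \<open>r \<in> SR_rel R\<close> obtain u v where r: "r = SR_relator R u v" by (auto simp: SR_rel_eq)
    obtain j w where h: "h = (j, w)" by (cases h)
    show ?thesis unfolding r h acg_SR_relator[OF Q]
      by (intro SR_ker.sum SR_ker.psmult SR_relator_in)
  qed
  show ?thesis
    using x[unfolded SR_ker_def] k_linear_lin
  proof (rule SR_ker.image_fideal)
    fix a r b assume "r \<in> SR_rel R"
    then show "lin (acg R g) (fmul a (fmul r b)) \<in> SR_ker R"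
      unfolding lin_acg_fmul fmul_sum2 by (intro SR_ker.sum SR_ker_mul rel)
  qed
qed

lemma act_SR: "QYBE R \<Longrightarrow> x \<in> SR_ker R \<Longrightarrow> act R w x \<in> SR_ker R"
  by (induct w) (auto intro: acg_SR)

definition action ::
    "('n::finite, 'k::comm_ring_1) rmatrix \<Rightarrow> ('n, 'k) free_A \<Rightarrow> ('n, 'k) free_S \<Rightarrow> ('n, 'k) free_S"
  where "action R y p = lin (\<lambda>w. act R w p) y"

lemma action_bas[simp]: "action R (bas w) p = act R w p" by (simp add: action_def)

lemma k_linear_action1[simp]: "k_linear (\<lambda>y. action R y p)" by (simp add: action_def)

lemma k_linear_action2[simp]: "k_linear (action R y)"
  unfolding action_def k_linear_def using k_linear_act[of R]
  by (auto simp: lin_def k_linear_def pm.scale_right_distrib sum.distrib pm.scale_sum_right mult.commute)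

lemma action_SR: "QYBE R \<Longrightarrow> p \<in> SR_ker R \<Longrightarrow> action R y p \<in> SR_ker R"
  unfolding action_def by (intro SR_ker.lin act_SR)

lemma action_fmul_left: "action R (fmul y y') p = action R y (action R y' p)"
proof (rule k_bilinear_eqI[of "\<lambda>y y'. action R (fmul y y') p" "\<lambda>y y'. action R y (action R y' p)"])
  show "k_linear (\<lambda>y'. action R y (action R y' p))" for y
    using k_linear_comp[OF k_linear_action2[of R y] k_linear_action1[of R p]] by simp
  show "k_linear (\<lambda>y'. action R (fmul y y') p)" for y
    using k_linear_comp[OF k_linear_action1[of R p] k_linear_fmul2[of y]] by simp
  show "k_linear (\<lambda>y. action R (fmul y y') p)" for y'
    using k_linear_comp[OF k_linear_action1[of R p] k_linear_fmul1[of y']] by simp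
  show "k_linear (\<lambda>y. action R y (action R y' p))" for y' by simp
qed (simp add: act_append)

lemma action_fmul: "action R y (fmul p q) = lin (\<lambda>(a, b). fmul (act R a p) (act R b q)) (lin dA y)"
proof (rule k_linear_eqI[of "\<lambda>y. action R y (fmul p q)" "\<lambda>y. lin (\<lambda>(a, b). fmul (act R a p) (act R b q)) (lin dA y)"])
  show "k_linear (\<lambda>y. lin (\<lambda>(a, b). fmul (act R a p) (act R b q)) (lin dA y))"
    using k_linear_comp[OF k_linear_lin k_linear_lin] by blast
qed (simp_all add: lin_dA act_fmul)

lemma psmult_collect3:
  "(\<Sum>u\<in>U. \<Sum>v\<in>V. psmult (c u v) (\<Sum>p\<in>P. psmult (d u v p) (\<Sum>m\<in>M. psmult (e u v p m) (f m))))
   = (\<Sum>m\<in>M. psmult (\<Sum>u\<in>U. \<Sum>v\<in>V. \<Sum>p\<in>P. c u v * d u v p * e u v p m) (f m))"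
proof -
  have "(\<Sum>u\<in>U. \<Sum>v\<in>V. psmult (c u v) (\<Sum>p\<in>P. psmult (d u v p) (\<Sum>m\<in>M. psmult (e u v p m) (f m))))
     = (\<Sum>u\<in>U. \<Sum>v\<in>V. \<Sum>p\<in>P. \<Sum>m\<in>M. psmult (c u v * d u v p * e u v p m) (f m))"
    by (simp add: pm.scale_sum_right mult.assoc)
  also have "\<dots> = (\<Sum>m\<in>M. \<Sum>u\<in>U. \<Sum>v\<in>V. \<Sum>p\<in>P. psmult (c u v * d u v p * e u v p m) (f m))"
    by (simp only: sum.swap[of _ P M] sum.swap[of _ V M] sum.swap[of _ U M])
  also have "\<dots> = (\<Sum>m\<in>M. psmult (\<Sum>u\<in>U. \<Sum>v\<in>V. \<Sum>p\<in>P. c u v * d u v p * e u v p m) (f m))"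
    by (simp add: pm.scale_sum_left)
  finally show ?thesis .
qed

lemma lin_acg_single: "lin (acg R (j, v)) (fgen u) = (\<Sum>i\<in>UNIV. psmult (R i j u v) (fgen i))"
  unfolding fgen_def lin_bas by (rule acg_single[unfolded fgen_def])

lemma act_two_gen:
  "act R [(a, b), (c, d)] (fgen x) = (\<Sum>p\<in>UNIV. psmult (R p c x d) (\<Sum>m\<in>UNIV. psmult (R m a p b) (fgen m)))"
  by (simp only: act.simps lin_acg_single lin_sum lin_psmult)

lemma AR_relator_coeff_QYBE:
  assumes "QYBE R"
  shows "(\<Sum>u\<in>UNIV. \<Sum>v\<in>UNIV. \<Sum>p\<in>UNIV. R i j v u * R p v x l * R m u p k)
    = (\<Sum>u\<in>UNIV. \<Sum>v\<in>UNIV. \<Sum>p\<in>UNIV. R v u l k * R p j x u * R m i p v)"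
proof -
  have "(\<Sum>u\<in>UNIV. \<Sum>v\<in>UNIV. \<Sum>p\<in>UNIV. R i j v u * R p v x l * R m u p k)
      = (\<Sum>p\<in>UNIV. \<Sum>v\<in>UNIV. \<Sum>u\<in>UNIV. R p v x l * R m u p k * R i j v u)"
    by (subst sum_rev3) (simp add: ac_simps)
  also have "\<dots> = (\<Sum>p\<in>UNIV. \<Sum>v\<in>UNIV. \<Sum>u\<in>UNIV. R m i p v * R p j x u * R v u l k)"
    using QYBE_D[OF assms, of m i j x l k] by simp
  also have "\<dots> = (\<Sum>u\<in>UNIV. \<Sum>v\<in>UNIV. \<Sum>p\<in>UNIV. R v u l k * R p j x u * R m i p v)"
    by (subst sum_rev3) (simp add: ac_simps)
  finally show ?thesis .
qed

lemma action_AR_relator_gen: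
  assumes "QYBE R"
  shows "action R (AR_relator R i j k l) (fgen x) = 0"
proof -
  have "action R (AR_relator R i j k l) (fgen x) =
     (\<Sum>u\<in>UNIV. \<Sum>v\<in>UNIV. psmult (R i j v u) (\<Sum>p\<in>UNIV. psmult (R p v x l) (\<Sum>m\<in>UNIV. psmult (R m u p k) (fgen m))))
   - (\<Sum>u\<in>UNIV. \<Sum>v\<in>UNIV. psmult (R v u l k) (\<Sum>p\<in>UNIV. psmult (R p j x u) (\<Sum>m\<in>UNIV. psmult (R m i p v) (fgen m))))"
    by (simp add: AR_relator_def action_def lin_diff lin_sum lin_psmult act_two_gen del: act.simps)
  also have "\<dots> = 0"
    by (simp only: psmult_collect3 AR_relator_coeff_QYBE[OF assms] diff_self)
  finally show ?thesis .
qed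

lemma sum_swap_pairs:
  "(\<Sum>a\<in>A. \<Sum>b\<in>B. \<Sum>c\<in>C. \<Sum>d\<in>D. f a b c d)
    = (\<Sum>c\<in>C. \<Sum>d\<in>D. \<Sum>a\<in>A. \<Sum>b\<in>B. f a b c d)"
proof -
  have "(\<Sum>a\<in>A. \<Sum>b\<in>B. \<Sum>c\<in>C. \<Sum>d\<in>D. f a b c d)
    = (\<Sum>a\<in>A. \<Sum>c\<in>C. \<Sum>d\<in>D. \<Sum>b\<in>B. f a b c d)"
    by (rule sum.cong[OF refl]) (rule sum_rot3')
  also have "\<dots> = (\<Sum>c\<in>C. \<Sum>d\<in>D. \<Sum>a\<in>A. \<Sum>b\<in>B. f a b c d)"
    by (rule sum_rot3')
  finally show ?thesis .
qed

lemma dA_AR_relator: fixes R :: "('n::finite, 'k::comm_ring_1) rmatrix"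
  shows "lin dA (AR_relator R i j k l) =
   (\<Sum>a\<in>(UNIV::'n set). \<Sum>b\<in>(UNIV::'n set). ptens (AR_relator R i j a b) (bas [(a, k), (b, l)]))
 + (\<Sum>v\<in>(UNIV::'n set). \<Sum>u\<in>(UNIV::'n set). ptens (bas [(i, v), (j, u)]) (AR_relator R v u k l))"
proof -
  define T1 where "T1 = (\<Sum>u\<in>(UNIV::'n set). \<Sum>v\<in>(UNIV::'n set). \<Sum>a\<in>(UNIV::'n set). \<Sum>b\<in>(UNIV::'n set). psmult (R i j v u) (bas ([(u,a),(v,b)],[(a,k),(b,l)])))"
  define T2 where "T2 = (\<Sum>u\<in>(UNIV::'n set). \<Sum>v\<in>(UNIV::'n set). \<Sum>a\<in>(UNIV::'n set). \<Sum>b\<in>(UNIV::'n set). psmult (R v u l k) (bas ([(i,a),(j,b)],[(a,v),(b,u)])))"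
  define X1 where "X1 = (\<Sum>a\<in>(UNIV::'n set). \<Sum>b\<in>(UNIV::'n set). \<Sum>u\<in>(UNIV::'n set). \<Sum>v\<in>(UNIV::'n set). psmult (R i j v u) (bas ([(u,a),(v,b)],[(a,k),(b,l)])))"
  define X2 where "X2 = (\<Sum>a\<in>(UNIV::'n set). \<Sum>b\<in>(UNIV::'n set). \<Sum>u\<in>(UNIV::'n set). \<Sum>v\<in>(UNIV::'n set). psmult (R v u b a) (bas ([(i,v),(j,u)],[(a,k),(b,l)])))"
  define Y1 where "Y1 = (\<Sum>v\<in>(UNIV::'n set). \<Sum>u\<in>(UNIV::'n set). \<Sum>a\<in>(UNIV::'n set). \<Sum>b\<in>(UNIV::'n set). psmult (R v u b a) (bas ([(i,v),(j,u)],[(a,k),(b,l)])))"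
  define Y2 where "Y2 = (\<Sum>v\<in>(UNIV::'n set). \<Sum>u\<in>(UNIV::'n set). \<Sum>a\<in>(UNIV::'n set). \<Sum>b\<in>(UNIV::'n set). psmult (R b a l k) (bas ([(i,v),(j,u)],[(v,b),(u,a)])))"
  have L: "lin dA (AR_relator R i j k l) = T1 - T2"
    by (simp add: AR_relator_def T1_def T2_def lin_diff lin_sum lin_psmult pm.scale_sum_right)
  have RR: "(\<Sum>a\<in>(UNIV::'n set). \<Sum>b\<in>(UNIV::'n set). ptens (AR_relator R i j a b) (bas [(a, k), (b, l)]))
    + (\<Sum>v\<in>(UNIV::'n set). \<Sum>u\<in>(UNIV::'n set). ptens (bas [(i, v), (j, u)]) (AR_relator R v u k l)) = (X1 - X2) + (Y1 - Y2)"
    by (simp add: AR_relator_def X1_def X2_def Y1_def Y2_def ptens_lin sum_subtractf)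
  have 1: "X1 = T1" unfolding X1_def T1_def by (rule sum_swap_pairs)
  have 2: "X2 = Y1" unfolding X2_def Y1_def by (subst sum_swap_pairs) (rule sum.swap)
  have 3: "Y2 = T2" unfolding Y2_def T2_def by (rule sum_swap_pairs)
  show ?thesis using L RR 1 2 3 by simp
qed

lemma dA_append: "dA (x @ y) = tens_mul fmul (dA x) (dA y)"
proof -
  have "dA (x @ y) = (\<Sum>L1\<in>idx_lists (length x). \<Sum>L2\<in>idx_lists (length y). bas (zip_fst x L1 @ zip_fst y L2, zip_snd L1 x @ zip_snd L2 y))"
    unfolding dA_explicit length_append sum_idx_lists_add
    by (rule sum.cong[OF refl], rule sum.cong[OF refl]) (simp add: idx_lists_def zip_fst_append zip_snd_append)
  also have "\<dots> = tens_mul fmul (dA x) (dA y)"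
    by (simp add: dA_explicit tens_mul_sum1 tens_mul_sum2 tens_mul_bas, rule sum.swap)
  finally show ?thesis .
qed

lemma lin_dA_fmul: "lin dA (fmul y y') = tens_mul fmul (lin dA y) (lin dA y')"
proof (rule k_bilinear_eqI[of "\<lambda>y y'. lin dA (fmul y y')" "\<lambda>y y'. tens_mul fmul (lin dA y) (lin dA y')"])
  show "k_linear (\<lambda>y'. lin dA (fmul y y'))" for y
    using k_linear_comp[OF k_linear_lin[of dA] k_linear_fmul2[of y]] by simp
  show "k_linear (\<lambda>ya. lin dA (fmul ya y'))" for y'
    using k_linear_comp[OF k_linear_lin[of dA] k_linear_fmul1[of y']] by simp
  show "k_linear (\<lambda>y'. tens_mul fmul (lin dA y) (lin dA y'))" for y
    using k_linear_comp[OF k_linear_tens_mul2[of fmul "lin dA y"] k_linear_lin[of dA]] by simp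
  show "k_linear (\<lambda>y. tens_mul fmul (lin dA y) (lin dA y'))" for y'
    using k_linear_comp[OF k_linear_tens_mul1[of fmul "lin dA y'"] k_linear_lin[of dA]] by simp
qed (simp add: dA_append)

lemma dA_AR:
  assumes "y \<in> AR_ker R" shows "lin dA y \<in> ptens_ker (AR_ker R) (AR_ker R)"
  using assms[unfolded AR_ker_def] k_linear_lin
proof (rule ptens_ker.image_fideal)
  fix a r b assume "r \<in> AR_rel R"
  then obtain i j k l where r: "r = AR_relator R i j k l" by (auto simp: AR_rel_eq)
  have "lin dA r \<in> ptens_ker (AR_ker R) (AR_ker R)"
    unfolding r dA_AR_relator
    by (intro ptens_ker.add ptens_ker.sum ptens_ker_ptens1 ptens_ker_ptens2 AR_relator_in)
  then show "lin dA (fmul a (fmul r b)) \<in> ptens_ker (AR_ker R) (AR_ker R)"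
    unfolding lin_dA_fmul by (intro ptens_ker_tens_mul) (simp_all add: AR_ker_mul)
qed

lemma action_fmul_ptens:
  "lin (\<lambda>(a, b). fmul (act R a p) (act R b q)) (ptens X Y) = fmul (action R X p) (action R Y q)"
proof -
  have "lin (\<lambda>(a, b). fmul (action R (bas a) p) (action R (bas b) q)) (ptens X Y)
      = fmul (action R X p) (action R Y q)"
    by (rule lin_ptens, rule k_linear_comp[OF k_linear_fmul1 k_linear_action1],
        rule k_linear_comp[OF k_linear_fmul2 k_linear_action1])
  then show ?thesis by simp
qed

lemma action_AR_relator_fone: "action R (AR_relator R i j k l) (bas []) = 0"
  using act_fone[of R, unfolded fone_def]
  by (simp add: AR_relator_def action_def lin_diff lin_sum lin_psmult if_distrib[of "psmult _"]
      if_distrib[of "\<lambda>c. psmult c _"] if_distrib[of "(*) _"] sum_if_const sum.delta sum.delta' cong: if_cong)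

lemma action_AR_relator_word:
  assumes Q: "QYBE R"
  shows "action R (AR_relator R i j k l) (bas w) \<in> SR_ker R"
proof (induct w arbitrary: i j k l)
  case Nil
  then show ?case by (simp add: action_AR_relator_fone SR_ker.zero)
next
  case (Cons m w)
  have "action R (AR_relator R i j k l) (bas (m # w)) = action R (AR_relator R i j k l) (fmul (fgen m) (bas w))"
    by (simp add: fgen_def)
  also have "\<dots> = (\<Sum>a\<in>UNIV. \<Sum>b\<in>UNIV. fmul (action R (AR_relator R i j a b) (fgen m)) (action R (bas [(a, k), (b, l)]) (bas w)))
      + (\<Sum>v\<in>UNIV. \<Sum>u\<in>UNIV. fmul (action R (bas [(i, v), (j, u)]) (fgen m)) (action R (AR_relator R v u k l) (bas w)))"
    by (simp only: action_fmul dA_AR_relator lin_add lin_sum action_fmul_ptens)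
  also have "\<dots> = (\<Sum>v\<in>UNIV. \<Sum>u\<in>UNIV. fmul (action R (bas [(i, v), (j, u)]) (fgen m)) (action R (AR_relator R v u k l) (bas w)))"
    by (simp add: action_AR_relator_gen[OF Q])
  also have "\<dots> \<in> SR_ker R"
    by (intro SR_ker.sum SR_ker_mul Cons)
  finally show ?case .
qed

lemma action_AR_relator: "QYBE R \<Longrightarrow> action R (AR_relator R i j k l) q \<in> SR_ker R"
  by (subst k_linear_eq_lin[OF k_linear_action2]) (intro SR_ker.lin action_AR_relator_word)

lemma action_AR:
  assumes Q: "QYBE R" and y: "y \<in> AR_ker R"
  shows "action R y p \<in> SR_ker R"
  using y[unfolded AR_ker_def] k_linear_action1
proof (rule SR_ker.image_fideal)
  fix a r b assume "r \<in> AR_rel R"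
  then obtain i j k l where r: "r = AR_relator R i j k l" by (auto simp: AR_rel_eq)
  show "action R (fmul a (fmul r b)) p \<in> SR_ker R"
    unfolding r action_fmul_left by (intro action_SR[OF Q] action_AR_relator[OF Q])
qed

section \<open>The kernel of the smash product is an ideal\<close>

lemma smash_ker_eq: "smash_ker R = ptens_ker (SR_ker R) (AR_ker R)"
  by (simp add: smash_ker_def ptens_ker_def)

lemma smash_ker_ptens1: "x \<in> SR_ker R \<Longrightarrow> ptens x y \<in> smash_ker R"
  and smash_ker_ptens2: "y \<in> AR_ker R \<Longrightarrow> ptens x y \<in> smash_ker R"
  unfolding smash_ker_eq by (erule ptens_ker_ptens1, erule ptens_ker_ptens2)

interpretation smash_ker: ksubmodule "smash_ker R" for R
  unfolding smash_ker_def by (rule ksubmodule_kspan)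

lemma smash_mul_ptens_bas:
  "smash_mul R (ptens p y) (bas (q, w)) = lin (\<lambda>(a, b). smash_tens (fmul p (act R a (bas q))) (b @ w)) (lin dA y)"
proof (rule k_linear_eqI[of "\<lambda>y. smash_mul R (ptens p y) (bas (q, w))"])
  show "k_linear (\<lambda>y. smash_mul R (ptens p y) (bas (q, w)))"
    using k_linear_comp[OF k_linear_smash1 k_linear_ptens2] by blast
  show "k_linear (\<lambda>y. lin (\<lambda>(a, b). smash_tens (fmul p (act R a (bas q))) (b @ w)) (lin dA y))"
    using k_linear_comp[OF k_linear_lin k_linear_lin] by blast
qed (simp add: smash_tens_def[symmetric] smash_tens_bas[symmetric] smash_mul_smash_tens lin_dA del: smash_tens_bas)

lemma smash_mul_bas_ptens: "smash_mul R (bas (q, w)) (ptens p y) =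
   (\<Sum>L\<in>idx_lists (length w). ptens (fmul (bas q) (act R (zip_fst w L) p)) (fmul (bas (zip_snd L w)) y))"
proof (rule k_linear_eqI[of "\<lambda>y. smash_mul R (bas (q, w)) (ptens p y)"])
  show "k_linear (\<lambda>y. smash_mul R (bas (q, w)) (ptens p y))"
    using k_linear_comp[OF k_linear_smash2 k_linear_ptens2] by blast
  show "k_linear (\<lambda>y. \<Sum>L\<in>idx_lists (length w). ptens (fmul (bas q) (act R (zip_fst w L) p)) (fmul (bas (zip_snd L w)) y))"
    by (simp add: k_linear_def ptens_lin fmul_lin sum.distrib pm.scale_sum_right)
qed (simp add: smash_tens_def[symmetric] smash_tens_bas[symmetric] smash_mul_smash_tens del: smash_tens_bas)

lemma smash_mul_in_smash_ker_basis:
  shows "(\<And>q w. smash_mul R g (bas (q, w)) \<in> smash_ker R) \<Longrightarrow> smash_mul R g h \<in> smash_ker R"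
    and "(\<And>q w. smash_mul R (bas (q, w)) g \<in> smash_ker R) \<Longrightarrow> smash_mul R h g \<in> smash_ker R"
  by (subst k_linear_eq_lin[of "smash_mul R g"] k_linear_eq_lin[of "\<lambda>h. smash_mul R h g"];
       auto intro: smash_ker.lin split: prod.split)+

lemma smash_ker_mul_SR_ker: "p \<in> SR_ker R \<Longrightarrow> smash_mul R (ptens p y) h \<in> smash_ker R"
  by (rule smash_mul_in_smash_ker_basis(1), unfold smash_mul_ptens_bas, rule smash_ker.lin)
     (auto simp: smash_tens_def split: prod.split intro: smash_ker_ptens1 SR_ker_mul)

lemma smash_ker_mul_AR_ker:
  assumes Q: "QYBE R" and y: "y \<in> AR_ker R"
  shows "smash_mul R (ptens p y) h \<in> smash_ker R"
proof (rule smash_mul_in_smash_ker_basis(1))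
  fix q w
  have psi: "lin (\<lambda>(a, b). smash_tens (fmul p (act R a (bas q))) (b @ w)) (ptens Y1 Y2)
    = ptens (fmul p (action R Y1 (bas q))) (fmul Y2 (bas w))" for Y1 Y2
  proof -
    have "lin (\<lambda>(a, b). ptens (fmul p (action R (bas a) (bas q))) (fmul (bas b) (bas w))) (ptens Y1 Y2)
      = ptens (fmul p (action R Y1 (bas q))) (fmul Y2 (bas w))"
      by (rule lin_ptens, rule k_linear_comp[OF k_linear_ptens1 k_linear_comp[OF k_linear_fmul2 k_linear_action1]],
          rule k_linear_comp[OF k_linear_ptens2 k_linear_fmul1])
    then show ?thesis by (simp add: smash_tens_def)
  qed
  show "smash_mul R (ptens p y) (bas (q, w)) \<in> smash_ker R"
    unfolding smash_mul_ptens_bas using dA_AR[OF y] k_linear_lin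
    by (rule smash_ker.image_ptens_ker)
       (auto simp: psi intro: smash_ker_ptens1 smash_ker_ptens2 SR_ker_mul action_AR[OF Q] AR_ker_mul)
qed

lemma smash_ker_mul_left:
  assumes Q: "QYBE R" and "p \<in> SR_ker R \<or> y \<in> AR_ker R"
  shows "smash_mul R h (ptens p y) \<in> smash_ker R"
  by (rule smash_mul_in_smash_ker_basis(2), unfold smash_mul_bas_ptens, rule smash_ker.sum)
     (use assms(2) in \<open>auto intro: smash_ker_ptens1 smash_ker_ptens2 SR_ker_mul act_SR[OF Q] AR_ker_mul\<close>)

lemma smash_ker_ideal:
  assumes Q: "QYBE R" and x: "x \<in> smash_ker R"
  shows "smash_mul R x h \<in> smash_ker R" "smash_mul R h x \<in> smash_ker R"
  using x[unfolded smash_ker_eq]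
  by (rule smash_ker.image_ptens_ker;
      simp add: smash_ker_mul_SR_ker smash_ker_mul_AR_ker[OF Q] smash_ker_mul_left[OF Q])+

lemma quot_alg_smash: "QYBE R \<Longrightarrow> quot_alg (smash_mul R) smash_one (smash_ker R)"
  unfolding quot_alg_def
  by (auto simp: smash_lin smash_assoc smash_ker.zero intro: smash_ker.add smash_ker.psmult smash_ker_ideal)

lemma quot_alg_SR: "quot_alg fmul fone (SR_ker R)"
  unfolding SR_ker_def by (rule quot_alg_free)

lemma kcong_smash_mul1:
  "QYBE R \<Longrightarrow> kcong (smash_ker R) a b \<Longrightarrow> kcong (smash_ker R) (smash_mul R a c) (smash_mul R b c)"
  unfolding kcong_def by (metis smash_diff1 smash_ker_ideal(1))

lemma kcong_smash_mul2:
  "QYBE R \<Longrightarrow> kcong (smash_ker R) a b \<Longrightarrow> kcong (smash_ker R) (smash_mul R c a) (smash_mul R c b)"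
  unfolding kcong_def by (metis smash_diff2 smash_ker_ideal(2))

lemma kcong_fmul1: "kcong (SR_ker R) a b \<Longrightarrow> kcong (SR_ker R) (fmul a c) (fmul b c)"
  unfolding kcong_def by (metis fmul_diff1 SR_ker_mul(1))

lemma kcong_fmul2: "kcong (SR_ker R) a b \<Longrightarrow> kcong (SR_ker R) (fmul c a) (fmul c b)"
  unfolding kcong_def by (metis fmul_diff2 SR_ker_mul(2))

section \<open>Source, target, counit and comultiplication\<close>

definition source :: "('n, 'k::comm_ring_1) free_S \<Rightarrow> ('n, 'k) free_H" where
  "source p = lin (\<lambda>x. bas (x, [])) p"

definition target_gen :: "'n::finite \<Rightarrow> ('n, 'k::comm_ring_1) free_H" where
  "target_gen u = (\<Sum>v\<in>UNIV. bas ([v], [(v, u)]))"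

primrec target_word :: "('n::finite, 'k::comm_ring_1) rmatrix \<Rightarrow> 'n list \<Rightarrow> ('n, 'k) free_H"
  where
  "target_word R [] = smash_one"
| "target_word R (u # x) = smash_mul R (target_word R x) (target_gen u)"

definition target :: "('n::finite, 'k::comm_ring_1) rmatrix \<Rightarrow> ('n, 'k) free_S \<Rightarrow> ('n, 'k) free_H"
  where "target R p = lin (target_word R) p"

definition counit :: "('n, 'k::comm_ring_1) free_H \<Rightarrow> ('n, 'k) free_S" where
  "counit h = lin (\<lambda>(x, w). psmult (counit_word w) (bas x)) h"

definition comult ::
    "('n::finite, 'k::comm_ring_1) free_H \<Rightarrow> (('n list \<times> ('n \<times> 'n) list) \<times> ('n list \<times> ('n \<times> 'n) list) \<Rightarrow>\<^sub>0 'k)"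
  where
  "comult h = lin (\<lambda>(x, w). lin (\<lambda>(w1, w2). bas ((x, w1), ([], w2))) (dA w)) h"

lemma k_linear_source[simp]:
  "k_linear source" and k_linear_target[simp]: "k_linear (target R)" and k_linear_counit[simp]: "k_linear counit"
  and k_linear_comult[simp]: "k_linear comult"
  by (simp_all add: source_def[abs_def] target_def[abs_def] counit_def[abs_def] comult_def[abs_def])

lemma source_smash_tens: "source p = smash_tens p []"
  by (rule k_linear_eqI[of source "\<lambda>p. smash_tens p []"]) (simp_all add: source_def)

lemma counit_smash_tens: "counit (smash_tens p w) = psmult (counit_word w) p"
  by (rule k_linear_eqI[of "\<lambda>p. counit (smash_tens p w)" "\<lambda>p. psmult (counit_word w) p"])
     (simp_all add: counit_def k_linear_def smash_tens_lin lin_add lin_psmult pm.scale_right_distrib mult.commute)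

lemma counit_bas: "counit (bas (x, w)) = psmult (counit_word w) (bas x)"
  by (simp add: counit_def)

lemma source_mul_smash_tens: "smash_mul R (source a) (smash_tens q w) = smash_tens (fmul a q) w"
  by (simp add: source_smash_tens smash_mul_smash_tens)

lemma source_mul: "smash_mul R (source a) (source b) = source (fmul a b)"
  by (simp add: source_smash_tens smash_mul_smash_tens)

lemma source_fone: "source fone = smash_one"
  by (simp add: source_smash_tens smash_one_smash_tens)

lemma source_SR_ker: "a \<in> SR_ker R \<Longrightarrow> source a \<in> smash_ker R"
  by (simp add: source_smash_tens smash_tens_def smash_ker_ptens1)

lemma target_word_append: "target_word R (x @ y) = smash_mul R (target_word R y) (target_word R x)"
  by (induct x) (simp_all add: smash_assoc)

lemma target_fmul: "target R (fmul p q) = smash_mul R (target R q) (target R p)"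
proof (rule k_bilinear_eqI[of "\<lambda>p q. target R (fmul p q)" "\<lambda>p q. smash_mul R (target R q) (target R p)"])
  show "k_linear (\<lambda>p. target R (fmul p q))" for q using k_linear_comp[OF k_linear_target k_linear_fmul1] by blast
  show "k_linear (\<lambda>q. target R (fmul p q))" for p using k_linear_comp[OF k_linear_target k_linear_fmul2] by blast
  show "k_linear (\<lambda>p. smash_mul R (target R q) (target R p))" for q
    using k_linear_comp[OF k_linear_smash2 k_linear_target] by blast
  show "k_linear (\<lambda>q. smash_mul R (target R q) (target R p))" for p
    using k_linear_comp[OF k_linear_smash1 k_linear_target] by blast
qed (simp add: target_def target_word_append)

lemma target_fone: "target R fone = smash_one" by (simp add: target_def fone_def)

lemma target_fgen: "target R (fgen i) = target_gen i" by (simp add: target_def fgen_def)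

lemma source_fgen: "source (fgen i) = bas ([i], [])" by (simp add: source_def fgen_def)

lemma counit_mul_bas_smash_tens:
  "counit (smash_mul R (bas (x, w)) (smash_tens q w')) = psmult (counit_word w') (fmul (bas x) (act R w q))"
proof -
  have "counit (smash_mul R (bas (x, w)) (smash_tens q w')) =
     (\<Sum>L\<in>idx_lists (length w). psmult (counit_word (zip_snd L w)) (psmult (counit_word w') (fmul (bas x) (act R (zip_fst w L) q))))"
    using smash_mul_smash_tens[of R "bas x" w q w'] by (simp add: k_linear_sum[OF k_linear_counit] counit_smash_tens counit_word_append mult.commute)
  also have "\<dots> = psmult (counit_word w') (fmul (bas x) (action R (\<Sum>L\<in>idx_lists (length w). psmult (counit_word (zip_snd L w)) (bas (zip_fst w L))) q))"
    by (simp add: k_linear_sum[OF k_linear_action1] fmul_lin pm.scale_sum_right lin_psmult action_def lin_sum mult.commute)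
  also have "\<dots> = psmult (counit_word w') (fmul (bas x) (act R w q))"
    by (simp add: dA_counit_snd)
  finally show ?thesis .
qed

lemma counit_source_mul: "counit (smash_mul R (source a) h) = fmul a (counit h)"
proof (rule k_bilinear_eqI[of "\<lambda>a h. counit (smash_mul R (source a) h)" "\<lambda>a h. fmul a (counit h)"])
  show "k_linear (\<lambda>a. counit (smash_mul R (source a) h))" for h
    using k_linear_comp[OF k_linear_counit k_linear_comp[OF k_linear_smash1 k_linear_source]] by blast
  show "k_linear (\<lambda>h. counit (smash_mul R (source a) h))" for a
    using k_linear_comp[OF k_linear_counit k_linear_smash2] by blast
  show "k_linear (\<lambda>a. fmul a (counit h))" for h by simp
  show "k_linear (\<lambda>h. fmul a (counit h))" for a using k_linear_comp[OF k_linear_fmul2 k_linear_counit] by blast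
next
  fix x :: "'a list" and z :: "'a list \<times> ('a \<times> 'a) list"
  obtain y w where z: "z = (y, w)" by (cases z)
  show "counit (smash_mul R (source (bas x)) (bas z)) = fmul (bas x) (counit (bas z))"
    by (simp add: z source_mul_smash_tens[of R "bas x" "bas y" w, simplified] counit_bas fmul_psmult2)
qed

lemma counit_ptens: "counit (ptens p y) = fmul p (action R y fone)"
proof (rule k_bilinear_eqI[of "\<lambda>p y. counit (ptens p y)" "\<lambda>p y. fmul p (action R y fone)"])
  show "k_linear (\<lambda>p. counit (ptens p y))" for y using k_linear_comp[OF k_linear_counit k_linear_ptens1] by blast
  show "k_linear (\<lambda>y. counit (ptens p y))" for p using k_linear_comp[OF k_linear_counit k_linear_ptens2] by blast
  show "k_linear (\<lambda>p. fmul p (action R y fone))" for y by simp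
  show "k_linear (\<lambda>y. fmul p (action R y fone))" for p
    using k_linear_comp[OF k_linear_fmul2 k_linear_action1] by blast
qed (simp add: counit_bas act_fone fmul_psmult2)

lemma counit_smash_ker:
  assumes Q: "QYBE R" and h: "h \<in> smash_ker R"
  shows "counit h \<in> SR_ker R"
  using h[unfolded smash_ker_eq] k_linear_counit
  by (rule SR_ker.image_ptens_ker)
     (auto simp: counit_ptens[of _ _ R] intro: SR_ker_mul(1) SR_ker_mul(2)[OF action_AR[OF Q]])

lemma kcong_counit:
  "QYBE R \<Longrightarrow> kcong (smash_ker R) a b \<Longrightarrow> kcong (SR_ker R) (counit a) (counit b)"
  unfolding kcong_def by (metis counit_smash_ker k_linear_counit k_linear_minus)

lemma counit_mul_bas_bas:
  "counit (smash_mul R (bas (x, w)) (bas (y, w'))) = psmult (counit_word w') (fmul (bas x) (act R w (bas y)))"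
  using counit_mul_bas_smash_tens[of R x w "bas y" w'] by simp

lemma fgen_act_commute:
  "kcong (SR_ker R) (\<Sum>u\<in>UNIV. fmul (fgen u) (acg R (u, i) y)) (fmul (bas y) (fgen i))"
proof (induct y)
  case Nil
  have "(\<Sum>u\<in>UNIV. fmul (fgen u) (acg R (u, i) [])) = fgen i"
    by (simp add: if_distrib[of "fmul _"] cong: if_cong)
  then show ?case by (simp add: fgen_def)
next
  case (Cons m y)
  have "(\<Sum>u\<in>UNIV. fmul (fgen u) (acg R (u, i) (m # y)))
     = (\<Sum>u\<in>UNIV. \<Sum>l\<in>UNIV. \<Sum>p\<in>UNIV. fmul (psmult (R p u m l) (bas [u, p])) (acg R (l, i) y))"
    by (simp add: fmul_sum2 fmul_psmult2 fmul_psmult1 fmul_assoc[symmetric] fgen_def)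
  also have "\<dots> = (\<Sum>l\<in>UNIV. fmul (bas [m, l] - SR_relator R m l) (acg R (l, i) y))"
    unfolding SR_relator_expand fmul_sum1 by (rule sum.swap)
  also have "kcong (SR_ker R) \<dots> (\<Sum>l\<in>UNIV. fmul (bas [m, l]) (acg R (l, i) y))"
    by (intro SR_ker.cong_sum) (simp add: fmul_diff1 SR_ker.cong_minus_ker SR_ker_mul(1) SR_relator_in)
  also have "\<dots> = fmul (fgen m) (\<Sum>l\<in>UNIV. fmul (fgen l) (acg R (l, i) y))"
    by (simp add: fmul_sum2 fmul_assoc[symmetric] fgen_def)
  also have "kcong (SR_ker R) \<dots> (fmul (fgen m) (fmul (bas y) (fgen i)))"
    by (rule kcong_fmul2[OF Cons])
  also have "\<dots> = fmul (bas (m # y)) (fgen i)"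
    by (simp add: fmul_assoc[symmetric] fgen_def)
  finally show ?case .
qed

lemma counit_target_gen: "kcong (SR_ker R) (counit (smash_mul R (target_gen i) h)) (fmul (counit h) (fgen i))"
proof (rule SR_ker.cong_k_linear[of "\<lambda>h. counit (smash_mul R (target_gen i) h)" "\<lambda>h. fmul (counit h) (fgen i)"])
  show "k_linear (\<lambda>h. counit (smash_mul R (target_gen i) h))"
    using k_linear_comp[OF k_linear_counit k_linear_smash2] by blast
  show "k_linear (\<lambda>h. fmul (counit h) (fgen i))" using k_linear_comp[OF k_linear_fmul1 k_linear_counit] by blast
next
  fix z :: "'a list \<times> ('a \<times> 'a) list"
  obtain y w where z: "z = (y, w)" by (cases z)
  have "counit (smash_mul R (target_gen i) (bas z)) = (\<Sum>u\<in>UNIV. psmult (counit_word w) (fmul (fgen u) (acg R (u, i) y)))"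
    unfolding target_gen_def smash_sum1 k_linear_sum[OF k_linear_counit] z counit_mul_bas_bas
    by (simp add: fgen_def)
  also have "\<dots> = psmult (counit_word w) (\<Sum>u\<in>UNIV. fmul (fgen u) (acg R (u, i) y))"
    by (simp add: pm.scale_sum_right)
  also have "kcong (SR_ker R) \<dots> (psmult (counit_word w) (fmul (bas y) (fgen i)))"
    by (rule SR_ker.cong_psmult[OF fgen_act_commute])
  also have "\<dots> = fmul (counit (bas z)) (fgen i)"
    by (simp add: z counit_bas fmul_psmult1)
  finally show "kcong (SR_ker R) (counit (smash_mul R (target_gen i) (bas z))) (fmul (counit (bas z)) (fgen i))" .
qed

lemma counit_target_word:
  "QYBE R \<Longrightarrow> kcong (SR_ker R) (counit (smash_mul R (target_word R b) h)) (fmul (counit h) (bas b))"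
proof (induct b arbitrary: h)
  case Nil
  then show ?case by (simp add: fone_def[symmetric])
next
  case (Cons i b)
  have "counit (smash_mul R (target_word R (i # b)) h) = counit (smash_mul R (target_word R b) (smash_mul R (target_gen i) h))"
    by (simp add: smash_assoc)
  also have "kcong (SR_ker R) \<dots> (fmul (counit (smash_mul R (target_gen i) h)) (bas b))"
    by (rule Cons(1)[OF Cons(2)])
  also have "kcong (SR_ker R) \<dots> (fmul (fmul (counit h) (fgen i)) (bas b))"
    by (rule kcong_fmul1[OF counit_target_gen])
  also have "\<dots> = fmul (counit h) (bas (i # b))"
    by (simp add: fmul_assoc fgen_def)
  finally show ?case .
qed

lemma counit_target:
  "QYBE R \<Longrightarrow> kcong (SR_ker R) (counit (smash_mul R (target R b) h)) (fmul (counit h) b)"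
proof (rule SR_ker.cong_k_linear[of "\<lambda>b. counit (smash_mul R (target R b) h)" "\<lambda>b. fmul (counit h) b"])
  show "k_linear (\<lambda>b. counit (smash_mul R (target R b) h))"
    using k_linear_comp[OF k_linear_counit k_linear_comp[OF k_linear_smash1 k_linear_target]] by blast
qed (simp_all add: target_def counit_target_word)

section \<open>Source and target commute\<close>

definition smash_commute :: "('n::finite, 'k::comm_ring_1) rmatrix \<Rightarrow> _ \<Rightarrow> _ \<Rightarrow> bool"
  where "smash_commute R a b \<longleftrightarrow> kcong (smash_ker R) (smash_mul R a b) (smash_mul R b a)"

lemma smash_commute_one[simp]: "smash_commute R smash_one a" "smash_commute R a smash_one"
  by (simp_all add: smash_commute_def)

lemma smash_commute_mul_right:
  assumes Q: "QYBE R" and "smash_commute R x a" "smash_commute R x b"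
  shows "smash_commute R x (smash_mul R a b)"
proof -
  have "smash_mul R x (smash_mul R a b) = smash_mul R (smash_mul R x a) b" by (simp add: smash_assoc)
  also have "kcong (smash_ker R) \<dots> (smash_mul R (smash_mul R a x) b)"
    using assms by (simp add: smash_commute_def kcong_smash_mul1)
  also have "\<dots> = smash_mul R a (smash_mul R x b)" by (simp add: smash_assoc)
  also have "kcong (smash_ker R) \<dots> (smash_mul R a (smash_mul R b x))"
    using assms by (simp add: smash_commute_def kcong_smash_mul2)
  also have "\<dots> = smash_mul R (smash_mul R a b) x" by (simp add: smash_assoc)
  finally show ?thesis unfolding smash_commute_def .
qed

lemma smash_commute_mul_left:
  assumes Q: "QYBE R" and "smash_commute R a x" "smash_commute R b x"
  shows "smash_commute R (smash_mul R a b) x"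
proof -
  have "smash_mul R (smash_mul R a b) x = smash_mul R a (smash_mul R b x)" by (simp add: smash_assoc)
  also have "kcong (smash_ker R) \<dots> (smash_mul R a (smash_mul R x b))"
    using assms by (simp add: smash_commute_def kcong_smash_mul2)
  also have "\<dots> = smash_mul R (smash_mul R a x) b" by (simp add: smash_assoc)
  also have "kcong (smash_ker R) \<dots> (smash_mul R (smash_mul R x a) b)"
    using assms by (simp add: smash_commute_def kcong_smash_mul1)
  also have "\<dots> = smash_mul R x (smash_mul R a b)" by (simp add: smash_assoc)
  finally show ?thesis unfolding smash_commute_def .
qed

lemma smash_commute_source_gen_target_gen: "smash_commute R (source (fgen i)) (target_gen j)"
proof -
  have L: "smash_mul R (source (fgen i)) (target_gen j) = (\<Sum>l\<in>UNIV. smash_tens (bas [i, l]) [(l, j)])"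
    unfolding target_gen_def smash_sum2 smash_tens_bas[symmetric] source_mul_smash_tens by (simp add: fgen_def)
  have "smash_mul R (target_gen j) (source (fgen i)) =
      (\<Sum>u\<in>UNIV. \<Sum>l\<in>UNIV. smash_tens (fmul (bas [u]) (act R [(u, l)] (fgen i))) [(l, j)])"
    unfolding target_gen_def smash_sum1 smash_tens_bas[symmetric] source_smash_tens smash_mul_smash_tens
    by (simp add: sum_idx_lists_Suc)
  also have "\<dots> = (\<Sum>l\<in>UNIV. smash_tens (\<Sum>u\<in>UNIV. \<Sum>m\<in>UNIV. psmult (R m u i l) (bas [u, m])) [(l, j)])"
    by (subst sum.swap) (simp del: acg.simps add: acg_single fmul_sum2 fmul_psmult2 smash_tens_lin fgen_def)
  also have "\<dots> = (\<Sum>l\<in>UNIV. smash_tens (bas [i, l] - SR_relator R i l) [(l, j)])"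
    by (simp only: SR_relator_expand)
  finally have "smash_mul R (source (fgen i)) (target_gen j) = smash_mul R (target_gen j) (source (fgen i))
    + (\<Sum>l\<in>UNIV. smash_tens (SR_relator R i l) [(l, j)])"
    unfolding L by (simp add: smash_tens_diff sum_subtractf)
  then show ?thesis unfolding smash_commute_def
    by (simp add: smash_ker.cong_plus_ker smash_tens_def smash_ker.sum smash_ker_ptens1 SR_relator_in)
qed

lemma smash_commute_source_gen_target_word:
  "QYBE R \<Longrightarrow> smash_commute R (source (fgen i)) (target_word R y)"
  by (induct y) (auto intro: smash_commute_mul_right smash_commute_source_gen_target_gen)

lemma source_cons: "source (bas (i # x)) = smash_mul R (source (fgen i)) (source (bas x))"
  by (simp add: source_mul fgen_def)

lemma smash_commute_source_target_word:
  "QYBE R \<Longrightarrow> smash_commute R (source (bas x)) (target_word R y)"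
proof (induct x)
  case Nil
  then show ?case by (simp add: source_fone[unfolded fone_def])
next
  case (Cons i x)
  then show ?case unfolding source_cons[of _ _ R] by (intro smash_commute_mul_left smash_commute_source_gen_target_word)
qed

lemma source_target_commute:
  "QYBE R \<Longrightarrow>
    smash_mul R (source a) (target R b) - smash_mul R (target R b) (source a) \<in> smash_ker R"
proof -
  assume Q: "QYBE R"
  have "kcong (smash_ker R) (smash_mul R (source a) (target R b)) (smash_mul R (target R b) (source a))"
  proof (rule smash_ker.cong_k_linear[of "\<lambda>a. smash_mul R (source a) (target R b)" "\<lambda>a. smash_mul R (target R b) (source a)"])
    show "k_linear (\<lambda>a. smash_mul R (source a) (target R b))"
      using k_linear_comp[OF k_linear_smash1 k_linear_source] by blast
    show "k_linear (\<lambda>a. smash_mul R (target R b) (source a))"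
      using k_linear_comp[OF k_linear_smash2 k_linear_source] by blast
    fix x
    show "kcong (smash_ker R) (smash_mul R (source (bas x)) (target R b)) (smash_mul R (target R b) (source (bas x)))"
    proof (rule smash_ker.cong_k_linear[of "\<lambda>b. smash_mul R (source (bas x)) (target R b)" "\<lambda>b. smash_mul R (target R b) (source (bas x))"])
      show "k_linear (\<lambda>b. smash_mul R (source (bas x)) (target R b))"
        using k_linear_comp[OF k_linear_smash2 k_linear_target] by blast
      show "k_linear (\<lambda>b. smash_mul R (target R b) (source (bas x)))"
        using k_linear_comp[OF k_linear_smash1 k_linear_target] by blast
    qed (use smash_commute_source_target_word[OF Q] in \<open>simp add: target_def smash_commute_def\<close>)
  qed
  then show ?thesis by (simp add: kcong_def)
qed

lemma smash_commute_source_target: "QYBE R \<Longrightarrow> smash_commute R (source a) (target R b)"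
  using source_target_commute by (simp add: smash_commute_def kcong_def)

section \<open>The counit and the target map\<close>

lemma counit_mul_target_gen: "counit (smash_mul R X (target_gen i)) = counit (smash_mul R X (source (fgen i)))"
proof (rule k_linear_eqI[of "\<lambda>X. counit (smash_mul R X (target_gen i))" "\<lambda>X. counit (smash_mul R X (source (fgen i)))"])
  show "k_linear (\<lambda>X. counit (smash_mul R X (target_gen i)))"
    using k_linear_comp[OF k_linear_counit k_linear_smash1] by blast
  show "k_linear (\<lambda>X. counit (smash_mul R X (source (fgen i))))"
    using k_linear_comp[OF k_linear_counit k_linear_smash1] by blast
next
  fix z :: "'a list \<times> ('a \<times> 'a) list"
  obtain x w where z: "z = (x, w)" by (cases z)
  have "counit (smash_mul R (bas z) (target_gen i)) = (\<Sum>u\<in>UNIV. psmult (counit_word [(u, i)]) (fmul (bas x) (act R w (bas [u]))))"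
    unfolding target_gen_def smash_sum2 k_linear_sum[OF k_linear_counit] z counit_mul_bas_bas by simp
  also have "\<dots> = fmul (bas x) (act R w (bas [i]))"
    by (simp add: if_distrib[of "\<lambda>c. psmult c _"] cong: if_cong)
  also have "\<dots> = counit (smash_mul R (bas z) (source (fgen i)))"
    by (simp add: z source_fgen counit_mul_bas_bas)
  finally show "counit (smash_mul R (bas z) (target_gen i)) = counit (smash_mul R (bas z) (source (fgen i)))" .
qed

lemma counit_mul_target_word:
  "QYBE R \<Longrightarrow> kcong (SR_ker R) (counit (smash_mul R g (target_word R a))) (counit (smash_mul R g (source (bas a))))"
proof (induct a arbitrary: g)
  case Nil
  then show ?case by (simp add: source_fone[unfolded fone_def])
next
  case (Cons i a)
  have "counit (smash_mul R g (target_word R (i # a))) = counit (smash_mul R g (smash_mul R (target_word R a) (source (fgen i))))"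
    using counit_mul_target_gen[of R "smash_mul R g (target_word R a)" i] by (simp add: smash_assoc)
  also have "kcong (SR_ker R) \<dots> (counit (smash_mul R g (smash_mul R (source (fgen i)) (target_word R a))))"
  proof -
    have c: "kcong (smash_ker R) (smash_mul R (target_word R a) (source (fgen i))) (smash_mul R (source (fgen i)) (target_word R a))"
      using smash_commute_source_gen_target_word[OF Cons(2), of i a] unfolding smash_commute_def
        by (rule smash_ker.cong_sym)
    show ?thesis by (rule kcong_counit[OF Cons(2) kcong_smash_mul2[OF Cons(2) c]])
  qed
  also have "\<dots> = counit (smash_mul R (smash_mul R g (source (fgen i))) (target_word R a))"
    by (simp add: smash_assoc)
  also have "kcong (SR_ker R) \<dots> (counit (smash_mul R (smash_mul R g (source (fgen i))) (source (bas a))))"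
    by (rule Cons(1)[OF Cons(2)])
  also have "\<dots> = counit (smash_mul R g (source (bas (i # a))))"
    by (simp add: smash_assoc source_cons[of _ _ R])
  finally show ?case .
qed

lemma counit_mul_target:
  "QYBE R \<Longrightarrow> kcong (SR_ker R) (counit (smash_mul R g (target R a))) (counit (smash_mul R g (source a)))"
proof (rule SR_ker.cong_k_linear[of "\<lambda>a. counit (smash_mul R g (target R a))" "\<lambda>a. counit (smash_mul R g (source a))"])
  show "k_linear (\<lambda>a. counit (smash_mul R g (target R a)))"
    using k_linear_comp[OF k_linear_counit k_linear_comp[OF k_linear_smash2 k_linear_target]] by blast
  show "k_linear (\<lambda>a. counit (smash_mul R g (source a)))"
    using k_linear_comp[OF k_linear_counit k_linear_comp[OF k_linear_smash2 k_linear_source]] by blast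
qed (simp add: target_def counit_mul_target_word)

lemma counit_mul_source_counit: "counit (smash_mul R g h) = counit (smash_mul R g (source (counit h)))"
proof (rule k_bilinear_eqI[of "\<lambda>g h. counit (smash_mul R g h)" "\<lambda>g h. counit (smash_mul R g (source (counit h)))"])
  show "k_linear (\<lambda>g. counit (smash_mul R g h))" for h
    using k_linear_comp[OF k_linear_counit k_linear_smash1] by blast
  show "k_linear (\<lambda>h. counit (smash_mul R g h))" for g
    using k_linear_comp[OF k_linear_counit k_linear_smash2] by blast
  show "k_linear (\<lambda>g. counit (smash_mul R g (source (counit h))))" for h
    using k_linear_comp[OF k_linear_counit k_linear_smash1] by blast
  show "k_linear (\<lambda>h. counit (smash_mul R g (source (counit h))))" for g
    using k_linear_comp[OF k_linear_counit k_linear_comp[OF k_linear_smash2 k_linear_comp[OF k_linear_source k_linear_counit]]] by blast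
next
  fix z z' :: "'a list \<times> ('a \<times> 'a) list"
  obtain x w where z: "z = (x, w)" by (cases z)
  obtain y w' where z': "z' = (y, w')" by (cases z')
  show "counit (smash_mul R (bas z) (bas z')) = counit (smash_mul R (bas z) (source (counit (bas z'))))"
    using counit_mul_bas_smash_tens[of R x w "bas y" w'] counit_mul_bas_smash_tens[of R x w "bas y" "[]"]
    by (simp add: z z' counit_bas source_smash_tens smash_tens_psmult smash_psmult2 lin_psmult k_linear_counit[unfolded k_linear_def])
qed

definition target_pair :: "'n::finite \<Rightarrow> 'n \<Rightarrow> ('n, 'k::comm_ring_1) free_H" where
  "target_pair b l = (\<Sum>a\<in>UNIV. \<Sum>m\<in>UNIV. bas ([a, m], [(m, b), (a, l)]))"

lemma target_gen_mul: "smash_mul R (target_gen v) (target_gen u) =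
  (\<Sum>a\<in>UNIV. \<Sum>b\<in>UNIV. \<Sum>l\<in>UNIV. \<Sum>m\<in>UNIV. psmult (R m a b l) (bas ([a, m], [(l, v), (b, u)])))"
  unfolding target_gen_def smash_sum1 smash_sum2
  by (simp del: acg.simps add: smash_mul_bas sum_idx_lists_Suc acg_single fmul_sum2 fmul_psmult2 smash_tens_lin fgen_def, rule sum.swap)

lemma target_gen_mul_cong:
  fixes R :: "('n::finite, 'k::comm_ring_1) rmatrix"
  shows "kcong (smash_ker R) (smash_mul R (target_gen v) (target_gen u)) (\<Sum>b\<in>UNIV. \<Sum>l\<in>UNIV. psmult (R b l u v) (target_pair b l))"
proof -
  define P1 where "P1 = (\<Sum>a\<in>(UNIV::'n set). \<Sum>m\<in>(UNIV::'n set). \<Sum>l\<in>(UNIV::'n set). \<Sum>b\<in>(UNIV::'n set).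
      psmult (R m a b l) (bas ([a, m], [(l, v), (b, u)])))"
  define N1 where "N1 = (\<Sum>a\<in>(UNIV::'n set). \<Sum>m\<in>(UNIV::'n set). \<Sum>l\<in>(UNIV::'n set). \<Sum>b\<in>(UNIV::'n set).
      psmult (R b l u v) (bas ([a, m], [(m, b), (a, l)])))"
  define Q where "Q = (\<Sum>b\<in>(UNIV::'n set). \<Sum>l\<in>(UNIV::'n set). \<Sum>a\<in>(UNIV::'n set). \<Sum>m\<in>(UNIV::'n set).
      psmult (R b l u v) (bas ([a, m], [(m, b), (a, l)])))"
  have A: "(\<Sum>a\<in>UNIV. \<Sum>m\<in>UNIV. ptens (bas [a, m]) (AR_relator R m a v u)) = P1 - N1"
    by (simp add: AR_relator_def P1_def N1_def ptens_lin sum_subtractf)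
  have B: "(\<Sum>b\<in>UNIV. \<Sum>l\<in>UNIV. psmult (R b l u v) (target_pair b l)) = Q"
    by (simp add: target_pair_def Q_def pm.scale_sum_right)
  have C: "smash_mul R (target_gen v) (target_gen u) = P1"
    unfolding target_gen_mul P1_def by (rule sum.cong[OF refl]) (rule sum_rev3)
  have D: "N1 = Q" unfolding N1_def Q_def by (subst sum_swap_pairs) (rule sum.swap)
  have "smash_mul R (target_gen v) (target_gen u) = Q + (\<Sum>a\<in>UNIV. \<Sum>m\<in>UNIV. ptens (bas [a, m]) (AR_relator R m a v u))"
    unfolding A C D[symmetric] by simp
  also have "kcong (smash_ker R) \<dots> Q"
    by (rule smash_ker.cong_plus_ker) (intro smash_ker.sum smash_ker_ptens2 AR_relator_in)
  finally show ?thesis unfolding B .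
qed

lemma target_pair_cong:
  fixes R :: "('n::finite, 'k::comm_ring_1) rmatrix"
  shows "kcong (smash_ker R) (target_pair b l) (\<Sum>u\<in>UNIV. \<Sum>v\<in>UNIV. psmult (R v u l b) (target_pair v u))"
proof -
  define W1 where "W1 = (\<Sum>a\<in>(UNIV::'n set). \<Sum>m\<in>(UNIV::'n set). \<Sum>i\<in>(UNIV::'n set). \<Sum>p\<in>(UNIV::'n set).
      psmult (R p i a m) (bas ([i, p], [(m, b), (a, l)])))"
  define W2 where "W2 = (\<Sum>i\<in>(UNIV::'n set). \<Sum>p\<in>(UNIV::'n set). \<Sum>m\<in>(UNIV::'n set). \<Sum>a\<in>(UNIV::'n set).
      psmult (R p i a m) (bas ([i, p], [(m, b), (a, l)])))"
  define W3 where "W3 = (\<Sum>i\<in>(UNIV::'n set). \<Sum>p\<in>(UNIV::'n set). \<Sum>u\<in>(UNIV::'n set). \<Sum>v\<in>(UNIV::'n set).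
      psmult (R v u l b) (bas ([i, p], [(p, v), (i, u)])))"
  define T where "T = (\<Sum>u\<in>(UNIV::'n set). \<Sum>v\<in>(UNIV::'n set). \<Sum>a\<in>(UNIV::'n set). \<Sum>m\<in>(UNIV::'n set).
      psmult (R v u l b) (bas ([a, m], [(m, v), (a, u)])))"
  have y: "target_pair b l = (\<Sum>a\<in>UNIV. \<Sum>m\<in>UNIV. ptens (bas [a, m] - SR_relator R a m) (bas [(m, b), (a, l)]))
      + (\<Sum>a\<in>UNIV. \<Sum>m\<in>UNIV. ptens (SR_relator R a m) (bas [(m, b), (a, l)]))"
    by (simp add: target_pair_def ptens_diff1 sum_subtractf)
  have 1: "(\<Sum>a\<in>UNIV. \<Sum>m\<in>UNIV. ptens (bas [a, m] - SR_relator R a m) (bas [(m, b), (a, l)])) = W1"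
    unfolding SR_relator_expand W1_def by (simp add: ptens_lin)
  have 2: "W1 = W2" unfolding W1_def W2_def by (subst sum_swap_pairs) (rule sum.cong[OF refl], rule sum.cong[OF refl], rule sum.swap)
  have 3: "(\<Sum>i\<in>UNIV. \<Sum>p\<in>UNIV. ptens (bas [i, p]) (AR_relator R p i b l)) = W2 - W3"
    by (simp add: AR_relator_def W2_def W3_def ptens_lin sum_subtractf)
  have 4: "W3 = T" unfolding W3_def T_def by (rule sum_swap_pairs)
  have 5: "(\<Sum>u\<in>UNIV. \<Sum>v\<in>UNIV. psmult (R v u l b) (target_pair v u)) = T"
    by (simp add: target_pair_def T_def pm.scale_sum_right)
  have "target_pair b l = (T + (\<Sum>i\<in>UNIV. \<Sum>p\<in>UNIV. ptens (bas [i, p]) (AR_relator R p i b l)))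
     + (\<Sum>a\<in>UNIV. \<Sum>m\<in>UNIV. ptens (SR_relator R a m) (bas [(m, b), (a, l)]))"
    unfolding y 1 2 3 4 by simp
  also have "kcong (smash_ker R) \<dots> (T + (\<Sum>i\<in>UNIV. \<Sum>p\<in>UNIV. ptens (bas [i, p]) (AR_relator R p i b l)))"
    by (rule smash_ker.cong_plus_ker) (intro smash_ker.sum smash_ker_ptens1 SR_relator_in)
  also have "kcong (smash_ker R) \<dots> T"
    by (rule smash_ker.cong_plus_ker) (intro smash_ker.sum smash_ker_ptens2 AR_relator_in)
  finally show ?thesis unfolding 5 .
qed

lemma target_SR_relator:
  fixes R :: "('n::finite, 'k::comm_ring_1) rmatrix"
  shows "target R (SR_relator R u v) \<in> smash_ker R"
proof -
  have Z: "kcong (smash_ker R) (\<Sum>b\<in>UNIV. \<Sum>l'\<in>UNIV. psmult (R b l' i l) (target_pair b l')) (target_pair l i)" for i l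
  proof -
    have "(\<Sum>b\<in>UNIV. \<Sum>l'\<in>UNIV. psmult (R b l' i l) (target_pair b l'))
      = (\<Sum>u\<in>UNIV. \<Sum>v\<in>UNIV. psmult (R v u i l) (target_pair v u))"
      by (rule sum.swap)
    then show ?thesis using target_pair_cong[of R l i] by (simp add: smash_ker.cong_sym)
  qed
  have "target R (SR_relator R u v) = smash_mul R (target_gen v) (target_gen u)
    - (\<Sum>i\<in>UNIV. \<Sum>l\<in>UNIV. psmult (R l i u v) (smash_mul R (target_gen l) (target_gen i)))"
    by (simp add: SR_relator_def target_def lin_diff lin_sum lin_psmult)
  also have "kcong (smash_ker R) \<dots> ((\<Sum>b\<in>UNIV. \<Sum>l\<in>UNIV. psmult (R b l u v) (target_pair b l))
      - (\<Sum>i\<in>UNIV. \<Sum>l\<in>UNIV. psmult (R l i u v) (\<Sum>b\<in>UNIV. \<Sum>l'\<in>UNIV. psmult (R b l' i l) (target_pair b l'))))"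
    by (intro smash_ker.cong_diff target_gen_mul_cong smash_ker.cong_sum smash_ker.cong_psmult)
  also have "kcong (smash_ker R) \<dots> ((\<Sum>b\<in>UNIV. \<Sum>l\<in>UNIV. psmult (R b l u v) (target_pair b l))
      - (\<Sum>i\<in>UNIV. \<Sum>l\<in>UNIV. psmult (R l i u v) (target_pair l i)))"
    by (intro smash_ker.cong_diff smash_ker.cong_refl smash_ker.cong_sum smash_ker.cong_psmult Z)
  also have "\<dots> = 0"
    by (subst (2) sum.swap) simp
  finally show ?thesis by (simp add: kcong_def)
qed

lemma target_SR_ker:
  assumes Q: "QYBE R" and x: "x \<in> SR_ker R"
  shows "target R x \<in> smash_ker R"
  using x[unfolded SR_ker_def] k_linear_target
proof (rule smash_ker.image_fideal)
  fix a r b assume "r \<in> SR_rel R"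
  then obtain u v where r: "r = SR_relator R u v" by (auto simp: SR_rel_eq)
  show "target R (fmul a (fmul r b)) \<in> smash_ker R"
    unfolding r target_fmul by (intro smash_ker_ideal[OF Q] target_SR_relator)
qed

section \<open>The comultiplication\<close>

lemma comult_bas:
  "comult (bas (x, w)) = (\<Sum>L\<in>idx_lists (length w). bas ((x, zip_fst w L), ([], zip_snd L w)))"
  by (simp add: comult_def lin_dA)

lemma comult_smash_tens:
  "comult (smash_tens p w) = (\<Sum>L\<in>idx_lists (length w). ptens (smash_tens p (zip_fst w L)) (bas ([], zip_snd L w)))"
proof (rule k_linear_eqI[of "\<lambda>p. comult (smash_tens p w)"])
  show "k_linear (\<lambda>p. comult (smash_tens p w))" using k_linear_comp[OF k_linear_comult k_linear_smash_tens] by blast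
  show "k_linear (\<lambda>p. \<Sum>L\<in>idx_lists (length w). ptens (smash_tens p (zip_fst w L)) (bas ([], zip_snd L w)))"
    by (simp add: k_linear_def smash_tens_lin ptens_lin sum.distrib pm.scale_sum_right)
qed (simp add: comult_bas)

lemma comult_ptens:
  "comult (ptens p y) = lin (\<lambda>(a, b). ptens (smash_tens p a) (smash_tens fone b)) (lin dA y)"
proof (rule k_linear_eqI[of "\<lambda>y. comult (ptens p y)"])
  show "k_linear (\<lambda>y. comult (ptens p y))" using k_linear_comp[OF k_linear_comult k_linear_ptens2] by blast
  show "k_linear (\<lambda>y. lin (\<lambda>(a, b). ptens (smash_tens p a) (smash_tens fone b)) (lin dA y))"
    using k_linear_comp[OF k_linear_lin k_linear_lin] by blast
qed (simp add: smash_tens_def[symmetric] comult_smash_tens lin_dA fone_def)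

abbreviation tens_ker :: "('n::finite, 'k::comm_ring_1) rmatrix \<Rightarrow> _" where
  "tens_ker R \<equiv> tker2 (smash_mul R) (smash_ker R) source (target R)"

lemma tens_ker_ptens1: "x \<in> smash_ker R \<Longrightarrow> ptens x y \<in> tens_ker R"
  and tens_ker_ptens2: "y \<in> smash_ker R \<Longrightarrow> ptens x y \<in> tens_ker R"
  and tens_ker_balanced:
    "ptens (smash_mul R (target R a) g) h - ptens g (smash_mul R (source a) h) \<in> tens_ker R"
  unfolding tker2_def by (rule kspan_gen, blast)+

interpretation tens_ker: ksubmodule "tens_ker R" for R
  unfolding tker2_def by (rule ksubmodule_kspan)

lemma comult_smash_ker:
  assumes Q: "QYBE R" and x: "x \<in> smash_ker R"
  shows "comult x \<in> tens_ker R"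
  using x[unfolded smash_ker_eq] k_linear_comult
proof (rule tens_ker.image_ptens_ker)
  show "comult (ptens p y) \<in> tens_ker R" if "p \<in> SR_ker R" for p y
    unfolding comult_ptens by (rule tens_ker.lin)
      (use that in \<open>auto simp: smash_tens_def split: prod.split intro: tens_ker_ptens1 smash_ker_ptens1\<close>)
  show "comult (ptens p y) \<in> tens_ker R" if "y \<in> AR_ker R" for p y
  proof -
    have split: "lin (\<lambda>(a, b). ptens (smash_tens p a) (smash_tens fone b)) (ptens Y1 Y2)
      = ptens (ptens p Y1) (ptens fone Y2)" for Y1 Y2
      unfolding smash_tens_def
      by (rule lin_ptens, rule k_linear_comp[OF k_linear_ptens1 k_linear_ptens2],
          rule k_linear_comp[OF k_linear_ptens2 k_linear_ptens2])
    show ?thesis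
      unfolding comult_ptens using dA_AR[OF that] k_linear_lin
      by (rule tens_ker.image_ptens_ker)
         (auto simp: split intro: tens_ker_ptens1 tens_ker_ptens2 smash_ker_ptens2)
  qed
qed

lemma comult_smash_one: "comult smash_one = ptens smash_one smash_one"
  by (simp add: smash_one_def comult_bas)

lemma comult_gen:
  "comult (bas ([i], [(u, v)])) = (\<Sum>l\<in>UNIV. ptens (bas ([i], [(u, l)])) (bas ([], [(l, v)])))"
  by (simp add: comult_bas sum_idx_lists_Suc)

lemma counit_gen: "counit (bas ([i], [(u, v)])) = (if u = v then fgen i else 0)"
  by (simp add: counit_bas fgen_def)

lemma comult_coassoc: "lin (\<lambda>(x, y). lin (\<lambda>(p, q). bas (p, q, y)) (comult (bas x))) (comult h)
    = lin (\<lambda>(x, y). ptens (bas x) (comult (bas y))) (comult h)"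
proof (rule k_linear_eqI[of "\<lambda>h. lin (\<lambda>(x, y). lin (\<lambda>(p, q). bas (p, q, y)) (comult (bas x))) (comult h)"
      "\<lambda>h. lin (\<lambda>(x, y). ptens (bas x) (comult (bas y))) (comult h)"])
  show "k_linear (\<lambda>h. lin (\<lambda>(x, y). lin (\<lambda>(p, q). bas (p, q, y)) (comult (bas x))) (comult h))"
    using k_linear_comp[OF k_linear_lin k_linear_comult] by blast
  show "k_linear (\<lambda>h. lin (\<lambda>(x, y). ptens (bas x) (comult (bas y))) (comult h))"
    using k_linear_comp[OF k_linear_lin k_linear_comult] by blast
next
  fix z :: "'a list \<times> ('a \<times> 'a) list"
  obtain x w where z: "z = (x, w)" by (cases z)
  have "lin (\<lambda>(x, y). lin (\<lambda>(p, q). bas (p, q, y)) (comult (bas x))) (comult (bas z))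
      = (\<Sum>L\<in>idx_lists (length w). \<Sum>M\<in>idx_lists (length w). bas ((x, zip_fst w M), ([], zip M L), ([], zip_snd L w)))"
    unfolding z comult_bas lin_sum
    by (rule sum.cong[OF refl]) (auto simp: idx_lists_def comult_bas lin_sum zip_fst_zip_fst zip_snd_zip_fst intro!: sum.cong)
  also have "\<dots> = (\<Sum>M\<in>idx_lists (length w). \<Sum>L\<in>idx_lists (length w). bas ((x, zip_fst w M), ([], zip M L), ([], zip_snd L w)))"
    by (rule sum.swap)
  also have "\<dots> = lin (\<lambda>(x, y). ptens (bas x) (comult (bas y))) (comult (bas z))"
    unfolding z comult_bas lin_sum
    by (rule sum.cong[OF refl]) (auto simp: idx_lists_def comult_bas ptens_sum2 zip_fst_zip_snd zip_snd_zip_snd intro!: sum.cong)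
  finally show "lin (\<lambda>(x, y). lin (\<lambda>(p, q). bas (p, q, y)) (comult (bas x))) (comult (bas z))
      = lin (\<lambda>(x, y). ptens (bas x) (comult (bas y))) (comult (bas z))" .
qed

lemma comult_counit_source: "lin (\<lambda>(x, y). smash_mul R (source (counit (bas x))) (bas y)) (comult h) = h"
proof (rule k_linear_eqI[of "\<lambda>h. lin (\<lambda>(x, y). smash_mul R (source (counit (bas x))) (bas y)) (comult h)" "\<lambda>h. h"])
  show "k_linear (\<lambda>h. lin (\<lambda>(x, y). smash_mul R (source (counit (bas x))) (bas y)) (comult h))"
    using k_linear_comp[OF k_linear_lin k_linear_comult] by blast
next
  fix z :: "'a list \<times> ('a \<times> 'a) list"
  obtain x w where z: "z = (x, w)" by (cases z)
  have "lin (\<lambda>(x, y). smash_mul R (source (counit (bas x))) (bas y)) (comult (bas z))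
      = (\<Sum>L\<in>idx_lists (length w). psmult (counit_word (zip_fst w L)) (smash_tens (bas x) (zip_snd L w)))"
    unfolding z comult_bas lin_sum
    by (simp add: counit_bas source_def lin_psmult smash_psmult1 smash_mul_bas)
  also have "\<dots> = ptens (bas x) (\<Sum>L\<in>idx_lists (length w). psmult (counit_word (zip_fst w L)) (bas (zip_snd L w)))"
    by (simp add: smash_tens_def ptens_lin)
  also have "\<dots> = bas z" by (simp add: dA_counit_fst z)
  finally show "lin (\<lambda>(x, y). smash_mul R (source (counit (bas x))) (bas y)) (comult (bas z)) = bas z" .
qed simp

lemma comult_counit_target: "lin (\<lambda>(x, y). smash_mul R (target R (counit (bas y))) (bas x)) (comult h) = h"
proof (rule k_linear_eqI[of "\<lambda>h. lin (\<lambda>(x, y). smash_mul R (target R (counit (bas y))) (bas x)) (comult h)" "\<lambda>h. h"])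
  show "k_linear (\<lambda>h. lin (\<lambda>(x, y). smash_mul R (target R (counit (bas y))) (bas x)) (comult h))"
    using k_linear_comp[OF k_linear_lin k_linear_comult] by blast
next
  fix z :: "'a list \<times> ('a \<times> 'a) list"
  obtain x w where z: "z = (x, w)" by (cases z)
  have "lin (\<lambda>(x, y). smash_mul R (target R (counit (bas y))) (bas x)) (comult (bas z))
      = (\<Sum>L\<in>idx_lists (length w). psmult (counit_word (zip_snd L w)) (bas (x, zip_fst w L)))"
    unfolding z comult_bas lin_sum
    by (simp add: counit_bas target_def lin_psmult smash_psmult1)
  also have "\<dots> = ptens (bas x) (\<Sum>L\<in>idx_lists (length w). psmult (counit_word (zip_snd L w)) (bas (zip_fst w L)))"
    by (simp add: ptens_lin)
  also have "\<dots> = bas z" by (simp add: dA_counit_snd z)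
  finally show "lin (\<lambda>(x, y). smash_mul R (target R (counit (bas y))) (bas x)) (comult (bas z)) = bas z" .
qed simp

abbreviation smash_tmul :: "('n::finite, 'k::comm_ring_1) rmatrix \<Rightarrow> _" where
  "smash_tmul R \<equiv> tens_mul (smash_mul R)"

lemma smash_tmul_ptens: "smash_tmul R (ptens a b) (ptens c d) = ptens (smash_mul R a c) (smash_mul R b d)"
  by (rule tens_mul_ptens) simp_all

lemmas smash_tmul_ptens_left = tens_mul_ptens_left[OF k_linear_smash1 k_linear_smash2]

lemma smash_tmul_assoc: "smash_tmul R (smash_tmul R X Y) Z = smash_tmul R X (smash_tmul R Y Z)"
  by (rule tens_mul_assoc) (simp_all add: smash_assoc)

lemma smash_mul_bas_empty:
  fixes R :: "('n::finite, 'k::comm_ring_1) rmatrix" and w w' :: "('n \<times> 'n) list"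
  shows "smash_mul R (bas ([], w)) (bas ([], w')) = bas ([], w @ w')"
proof -
  have "smash_mul R (bas ([], w)) (bas ([], w')) =
     (\<Sum>L\<in>(idx_lists (length w) :: 'n list set). psmult (counit_word (zip_fst w L)) (smash_tens (bas []) (zip_snd L w @ w')))"
    using act_fone[of R, unfolded fone_def] by (simp add: smash_mul_bas smash_tens_psmult fmul_psmult2)
  also have "\<dots> = lin (\<lambda>v. bas ([], v @ w')) (\<Sum>L\<in>(idx_lists (length w) :: 'n list set). psmult (counit_word (zip_fst w L)) (bas (zip_snd L w)))"
    by (simp add: lin_sum lin_psmult)
  also have "\<dots> = bas ([], w @ w')" by (simp add: dA_counit_fst)
  finally show ?thesis .
qed

lemma comult_mul_bas:
  fixes R :: "('n::finite, 'k::comm_ring_1) rmatrix" and w w' :: "('n \<times> 'n) list"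
  shows "comult (smash_mul R (bas (x, w)) (bas (y, w'))) = smash_tmul R (comult (bas (x, w))) (comult (bas (y, w')))"
proof -
  let ?m = "length w" and ?m' = "length w'"
  define X where "X L = fmul (bas x) (act R (zip_fst w L) (bas y))" for L :: "'n list"
  define F where "F L M1 M2 = ptens (smash_tens (X L) (zip L M1 @ zip_fst w' M2)) (bas (([]::'n list), zip_snd M1 w @ zip_snd M2 w'))" for L M1 M2 :: "'n list"
  have "comult (smash_mul R (bas (x, w)) (bas (y, w'))) =
     (\<Sum>L\<in>(idx_lists ?m :: 'n list set). \<Sum>M\<in>(idx_lists (length (zip_snd L w @ w')) :: 'n list set).
        ptens (smash_tens (X L) (zip_fst (zip_snd L w @ w') M)) (bas ([], zip_snd M (zip_snd L w @ w'))))"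
    by (simp add: smash_mul_bas k_linear_sum[OF k_linear_comult] comult_smash_tens X_def)
  also have "\<dots> = (\<Sum>L\<in>(idx_lists ?m :: 'n list set). \<Sum>M1\<in>(idx_lists ?m :: 'n list set). \<Sum>M2\<in>(idx_lists ?m' :: 'n list set). F L M1 M2)"
  proof (rule sum.cong[OF refl])
    fix L :: "'n list" assume L: "L \<in> idx_lists ?m"
    then have len: "length (zip_snd L w @ w') = ?m + ?m'" by (simp add: idx_lists_def)
    show "(\<Sum>M\<in>(idx_lists (length (zip_snd L w @ w')) :: 'n list set).
        ptens (smash_tens (X L) (zip_fst (zip_snd L w @ w') M)) (bas ([], zip_snd M (zip_snd L w @ w')))) =
        (\<Sum>M1\<in>(idx_lists ?m :: 'n list set). \<Sum>M2\<in>(idx_lists ?m' :: 'n list set). F L M1 M2)"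
      unfolding len sum_idx_lists_add F_def
      by (rule sum.cong[OF refl], rule sum.cong[OF refl])
         (use L in \<open>simp add: idx_lists_def zip_fst_append zip_snd_append zip_fst_zip_snd zip_snd_zip_snd\<close>)
  qed
  also have "\<dots> = (\<Sum>M1\<in>(idx_lists ?m :: 'n list set). \<Sum>M2\<in>(idx_lists ?m' :: 'n list set). \<Sum>L\<in>(idx_lists ?m :: 'n list set). F L M1 M2)"
    by (rule sum_rot3')
  also have "\<dots> = smash_tmul R (comult (bas (x, w))) (comult (bas (y, w')))"
  proof -
    have e: "smash_mul R (bas (x, zip_fst w N)) (bas (y, zip_fst w' K))
      = (\<Sum>L\<in>(idx_lists ?m :: 'n list set). smash_tens (X L) (zip L N @ zip_fst w' K))"
      if "N \<in> idx_lists ?m" for N K :: "'n list"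
      unfolding smash_mul_bas X_def
      by (rule sum.cong) (use that in \<open>auto simp: idx_lists_def zip_fst_zip_fst zip_snd_zip_fst\<close>)
    show ?thesis
      unfolding comult_bas tens_mul_sum1 tens_mul_sum2 tens_mul_bas smash_mul_bas_empty F_def
      by (rule trans[OF _ sum.swap], rule sum.cong[OF refl], rule sum.cong[OF refl])
         (simp add: e ptens_sum1)
  qed
  finally show ?thesis .
qed

lemma comult_mul: "comult (smash_mul R g h) = smash_tmul R (comult g) (comult h)"
proof (rule k_bilinear_eqI[of "\<lambda>g h. comult (smash_mul R g h)" "\<lambda>g h. smash_tmul R (comult g) (comult h)"])
  show "k_linear (\<lambda>g. comult (smash_mul R g h))" for h
    using k_linear_comp[OF k_linear_comult k_linear_smash1] by blast
  show "k_linear (\<lambda>h. comult (smash_mul R g h))" for g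
    using k_linear_comp[OF k_linear_comult k_linear_smash2] by blast
  show "k_linear (\<lambda>g. smash_tmul R (comult g) (comult h))" for h
    using k_linear_comp[OF k_linear_tens_mul1 k_linear_comult] by blast
  show "k_linear (\<lambda>h. smash_tmul R (comult g) (comult h))" for g
    using k_linear_comp[OF k_linear_tens_mul2 k_linear_comult] by blast
next
  fix z z' :: "'a list \<times> ('a \<times> 'a) list"
  obtain x w where z: "z = (x, w)" by (cases z)
  obtain y w' where z': "z' = (y, w')" by (cases z')
  show "comult (smash_mul R (bas z) (bas z')) = smash_tmul R (comult (bas z)) (comult (bas z'))"
    unfolding z z' by (rule comult_mul_bas)
qed

section \<open>The Takeuchi condition\<close>

lemma kcong_tens_ptens1: "kcong (smash_ker R) a b \<Longrightarrow> kcong (tens_ker R) (ptens a y) (ptens b y)"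
  unfolding kcong_def by (metis tens_ker_ptens1 ptens_diff1)
lemma kcong_tens_ptens2: "kcong (smash_ker R) a b \<Longrightarrow> kcong (tens_ker R) (ptens y a) (ptens y b)"
  unfolding kcong_def by (metis tens_ker_ptens2 ptens_diff2)
lemma kcong_tens_balanced:
  "kcong (tens_ker R) (ptens (smash_mul R (target R a) g) h) (ptens g (smash_mul R (source a) h))"
  unfolding kcong_def by (rule tens_ker_balanced)

lemma tens_ker_image:
  assumes "k_linear F" "\<And>x y. x \<in> smash_ker R \<Longrightarrow> F (ptens x y) \<in> tens_ker R"
    "\<And>x y. y \<in> smash_ker R \<Longrightarrow> F (ptens x y) \<in> tens_ker R"
    "\<And>a g h. F (ptens (smash_mul R (target R a) g) h - ptens g (smash_mul R (source a) h)) \<in> tens_ker R"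
    "Z \<in> tens_ker R"
  shows "F Z \<in> tens_ker R"
  using assms(5)[unfolded tker2_def] assms(1) by (rule tens_ker.image_kspan) (use assms(2-4) in blast)

lemma tens_ker_mul_right:
  assumes Q: "QYBE R" and Z: "Z \<in> tens_ker R"
  shows "smash_tmul R Z Y \<in> tens_ker R"
proof -
  have "smash_tmul R Z (bas y) \<in> tens_ker R" for y
  proof -
    obtain P Q' where yy: "y = (P, Q')" by (cases y)
    have y: "bas y = ptens (bas P) (bas Q')" by (simp add: yy)
    show ?thesis unfolding y
    proof (rule tens_ker_image[of "\<lambda>Z. smash_tmul R Z (ptens (bas P) (bas Q'))", OF _ _ _ _ Z])
      show "k_linear (\<lambda>Z. smash_tmul R Z (ptens (bas P) (bas Q')))" by simp
      show "smash_tmul R (ptens x y) (ptens (bas P) (bas Q')) \<in> tens_ker R" if "x \<in> smash_ker R" for x y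
        unfolding smash_tmul_ptens by (intro tens_ker_ptens1 smash_ker_ideal[OF Q] that)
      show "smash_tmul R (ptens x y) (ptens (bas P) (bas Q')) \<in> tens_ker R" if "y \<in> smash_ker R" for x y
        unfolding smash_tmul_ptens by (intro tens_ker_ptens2 smash_ker_ideal[OF Q] that)
      show "smash_tmul R (ptens (smash_mul R (target R a) g) h - ptens g (smash_mul R (source a) h)) (ptens (bas P) (bas Q')) \<in> tens_ker R" for a g h
        unfolding tens_mul_diff1 smash_tmul_ptens smash_assoc by (rule tens_ker_balanced)
    qed
  qed
  then have "lin (\<lambda>y. smash_tmul R Z (bas y)) Y \<in> tens_ker R" by (intro tens_ker.lin)
  moreover have "smash_tmul R Z Y = lin (\<lambda>y. smash_tmul R Z (bas y)) Y" by (rule k_linear_eq_lin) simp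
  ultimately show ?thesis by simp
qed

lemma kcong_tens_mul_right:
  "QYBE R \<Longrightarrow> kcong (tens_ker R) A B \<Longrightarrow> kcong (tens_ker R) (smash_tmul R A Y) (smash_tmul R B Y)"
  unfolding kcong_def by (metis tens_ker_mul_right tens_mul_diff1)

lemma tens_ker_mul_source:
  assumes Q: "QYBE R" and Z: "Z \<in> tens_ker R"
  shows "smash_tmul R (ptens (source a) smash_one) Z \<in> tens_ker R"
proof (rule tens_ker_image[of "smash_tmul R (ptens (source a) smash_one)", OF _ _ _ _ Z])
  show "k_linear (smash_tmul R (ptens (source a) smash_one))" by simp
  show "smash_tmul R (ptens (source a) smash_one) (ptens x y) \<in> tens_ker R" if "x \<in> smash_ker R" for x y
    unfolding smash_tmul_ptens by (intro tens_ker_ptens1 smash_ker_ideal[OF Q] that)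
  show "smash_tmul R (ptens (source a) smash_one) (ptens x y) \<in> tens_ker R" if "y \<in> smash_ker R" for x y
    unfolding smash_tmul_ptens using that by (simp add: tens_ker_ptens2)
  fix b g h
  have "smash_tmul R (ptens (source a) smash_one) (ptens (smash_mul R (target R b) g) h - ptens g (smash_mul R (source b) h))
     = ptens (smash_mul R (smash_mul R (source a) (target R b)) g) h - ptens (smash_mul R (source a) g) (smash_mul R (source b) h)"
    unfolding tens_mul_diff2 smash_tmul_ptens by (simp add: smash_assoc)
  also have "kcong (tens_ker R) \<dots> (ptens (smash_mul R (smash_mul R (target R b) (source a)) g) h - ptens (smash_mul R (source a) g) (smash_mul R (source b) h))"
    using smash_commute_source_target[OF Q, of a b] unfolding smash_commute_def
    by (intro tens_ker.cong_diff tens_ker.cong_refl kcong_tens_ptens1 kcong_smash_mul1[OF Q])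
  also have "kcong (tens_ker R) \<dots> 0"
    unfolding smash_assoc kcong_def by (simp add: tens_ker_balanced)
  finally show "smash_tmul R (ptens (source a) smash_one) (ptens (smash_mul R (target R b) g) h - ptens g (smash_mul R (source b) h)) \<in> tens_ker R"
    by (simp add: kcong_def)
qed

definition st_defect :: "('n::finite, 'k::comm_ring_1) rmatrix \<Rightarrow> ('n, 'k) free_S \<Rightarrow> _" where
  "st_defect R a = ptens (target R a) smash_one - ptens smash_one (source a)"

(* The Takeuchi condition for comult g, written as a componentwise product so that it
   is inherited by products (balanced_mul). *)
definition balanced :: "('n::finite, 'k::comm_ring_1) rmatrix \<Rightarrow> _ \<Rightarrow> bool" where
  "balanced R g \<longleftrightarrow> (\<forall>a. smash_tmul R (comult g) (st_defect R a) \<in> tens_ker R)"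

lemma tens_ker_mul_comult:
  assumes Q: "QYBE R" and T: "balanced R g" and Z: "Z \<in> tens_ker R"
  shows "smash_tmul R (comult g) Z \<in> tens_ker R"
proof (rule tens_ker_image[of "smash_tmul R (comult g)", OF _ _ _ _ Z])
  show "k_linear (smash_tmul R (comult g))" by simp
  show "smash_tmul R (comult g) (ptens x y) \<in> tens_ker R" if "x \<in> smash_ker R" for x y
    unfolding smash_tmul_ptens_left by (intro tens_ker.lin) (auto intro: tens_ker_ptens1 smash_ker_ideal[OF Q] that)
  show "smash_tmul R (comult g) (ptens x y) \<in> tens_ker R" if "y \<in> smash_ker R" for x y
    unfolding smash_tmul_ptens_left by (intro tens_ker.lin) (auto intro: tens_ker_ptens2 smash_ker_ideal[OF Q] that)
  fix b G H
  have "smash_tmul R (comult g) (ptens (smash_mul R (target R b) G) H - ptens G (smash_mul R (source b) H))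
     = smash_tmul R (smash_tmul R (comult g) (st_defect R b)) (ptens G H)"
    unfolding st_defect_def tens_mul_diff1 tens_mul_diff2 smash_tmul_assoc smash_tmul_ptens by simp
  also have "\<dots> \<in> tens_ker R"
  proof -
    have "smash_tmul R (comult g) (st_defect R b) \<in> tens_ker R" using T unfolding balanced_def by blast
    then show ?thesis by (rule tens_ker_mul_right[OF Q])
  qed
  finally show "smash_tmul R (comult g) (ptens (smash_mul R (target R b) G) H - ptens G (smash_mul R (source b) H)) \<in> tens_ker R" .
qed

lemma balanced_mul:
  assumes Q: "QYBE R" and g: "balanced R g" and h: "balanced R h"
  shows "balanced R (smash_mul R g h)"
  unfolding balanced_def[of R "smash_mul R g h"] comult_mul smash_tmul_assoc
proof
  fix a
  have "smash_tmul R (comult h) (st_defect R a) \<in> tens_ker R" using h unfolding balanced_def by blast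
  then show "smash_tmul R (comult g) (smash_tmul R (comult h) (st_defect R a))
    \<in> tens_ker R" by (rule tens_ker_mul_comult[OF Q g])
qed

lemma balanced_lin: "(\<And>x. balanced R (f x)) \<Longrightarrow> balanced R (lin f p)"
proof -
  assume T: "\<And>x. balanced R (f x)"
  show "balanced R (lin f p)" unfolding balanced_def
  proof
    fix a
    have I: "k_linear (\<lambda>X. smash_tmul R (comult X) (st_defect R a))"
      using k_linear_comp[OF k_linear_tens_mul1 k_linear_comult] by blast
    have "smash_tmul R (comult (lin f p)) (st_defect R a) = lin (\<lambda>x. smash_tmul R (comult (f x)) (st_defect R a)) p"
      by (rule lin_comp_k_linear[OF I])
    also have "\<dots> \<in> tens_ker R" using T unfolding balanced_def by (intro tens_ker.lin) blast
    finally show "smash_tmul R (comult (lin f p)) (st_defect R a) \<in> tens_ker R" .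
  qed
qed

lemma comult_source: "comult (source a) = ptens (source a) smash_one"
proof (rule k_linear_eqI[of "\<lambda>a. comult (source a)" "\<lambda>a. ptens (source a) smash_one"])
  show "k_linear (\<lambda>a. comult (source a))" using k_linear_comp[OF k_linear_comult k_linear_source] by blast
  show "k_linear (\<lambda>a. ptens (source a) smash_one)" using k_linear_comp[OF k_linear_ptens1 k_linear_source] by blast
qed (simp add: source_def comult_bas smash_one_def)

lemma balanced_source: "QYBE R \<Longrightarrow> balanced R (source x)"
  unfolding balanced_def
proof
  fix a assume Q: "QYBE R"
  have "smash_tmul R (comult (source x)) (st_defect R a) = ptens (smash_mul R (source x) (target R a)) smash_one - ptens (source x) (source a)"
    by (simp add: comult_source st_defect_def tens_mul_diff2 smash_tmul_ptens)
  also have "kcong (tens_ker R) \<dots> (ptens (smash_mul R (target R a) (source x)) smash_one - ptens (source x) (smash_mul R (source a) smash_one))"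
    using smash_commute_source_target[OF Q, of x a] unfolding smash_commute_def
      by (intro tens_ker.cong_diff kcong_tens_ptens1) simp_all
  also have "kcong (tens_ker R) \<dots> 0" unfolding kcong_def
    using tens_ker_balanced[of R a "source x" smash_one] by simp
  finally show "smash_tmul R (comult (source x)) (st_defect R a) \<in> tens_ker R" by (simp add: kcong_def)
qed

lemma balanced_one: "balanced R smash_one"
  unfolding balanced_def comult_smash_one st_defect_def
  by (auto simp: tens_mul_diff2 smash_tmul_ptens intro: tens_ker_balanced[of R _ smash_one smash_one, simplified])

lemma kcong_tens_mul_source:
  "QYBE R \<Longrightarrow> kcong (tens_ker R) A B \<Longrightarrow> kcong (tens_ker R) (smash_tmul R (ptens (source a) smash_one) A) (smash_tmul R (ptens (source a) smash_one) B)"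
  unfolding kcong_def by (metis tens_ker_mul_source tens_mul_diff2)

lemma cgen_mul_target_gen_cong:
  fixes R :: "('n::finite, 'k::comm_ring_1) rmatrix"
  shows "kcong (smash_ker R) (smash_mul R (bas ([], [(p, m)])) (target_gen i))
     (\<Sum>l\<in>UNIV. \<Sum>r\<in>UNIV. psmult (R r l i m) (smash_mul R (target_gen r) (bas ([], [(p, l)]))))"
proof -
  have L: "smash_mul R (bas ([], [(p, m)])) (target_gen i) =
      (\<Sum>u\<in>UNIV. \<Sum>y\<in>UNIV. \<Sum>z\<in>UNIV. psmult (R z p u y) (bas ([z], [(y, m), (u, i)])))"
    unfolding target_gen_def smash_sum2
    by (simp del: acg.simps add: smash_mul_bas sum_idx_lists_Suc acg_single smash_tens_lin fgen_def fone_fmul[unfolded fone_def])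
  have Rt: "smash_mul R (target_gen r) (bas ([], [(p, l)])) = (\<Sum>z\<in>UNIV. bas ([z], [(z, r), (p, l)]))" for r l
    unfolding target_gen_def smash_sum1
    using act_fone[of R, unfolded fone_def]
    by (simp add: smash_mul_bas sum_idx_lists_Suc fmul_psmult2 smash_tens_psmult if_distrib[of "\<lambda>c. psmult c _"] cong: if_cong)
  have A: "(\<Sum>z\<in>UNIV. ptens (bas [z]) (AR_relator R z p m i)) =
     (\<Sum>z\<in>(UNIV::'n set). \<Sum>y\<in>(UNIV::'n set). \<Sum>u\<in>(UNIV::'n set). psmult (R z p u y) (bas ([z], [(y, m), (u, i)])))
   - (\<Sum>z\<in>(UNIV::'n set). \<Sum>l\<in>(UNIV::'n set). \<Sum>r\<in>(UNIV::'n set). psmult (R r l i m) (bas ([z], [(z, r), (p, l)])))"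
    by (simp add: AR_relator_def ptens_lin sum_subtractf)
  have "smash_mul R (bas ([], [(p, m)])) (target_gen i) =
      (\<Sum>l\<in>UNIV. \<Sum>r\<in>UNIV. psmult (R r l i m) (smash_mul R (target_gen r) (bas ([], [(p, l)]))))
      + (\<Sum>z\<in>UNIV. ptens (bas [z]) (AR_relator R z p m i))"
    unfolding A L Rt pm.scale_sum_right
    by (subst sum_rev3, subst (2) sum_rot3) simp
  also have "kcong (smash_ker R) \<dots> (\<Sum>l\<in>UNIV. \<Sum>r\<in>UNIV. psmult (R r l i m) (smash_mul R (target_gen r) (bas ([], [(p, l)]))))"
    by (rule smash_ker.cong_plus_ker) (intro smash_ker.sum smash_ker_ptens2 AR_relator_in)
  finally show ?thesis .
qed

lemma balanced_cgen_step:
  fixes R :: "('n::finite, 'k::comm_ring_1) rmatrix"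
  shows "kcong (tens_ker R) (smash_tmul R (comult (bas ([], [(p, q)]))) (ptens (target_gen i) smash_one))
              (smash_tmul R (comult (bas ([], [(p, q)]))) (ptens smash_one (source (fgen i))))"
proof -
  have X: "comult (bas ([], [(p, q)])) = (\<Sum>l\<in>UNIV. ptens (bas ([]::'n list, [(p, l)])) (bas ([], [(l, q)])))"
    by (simp add: comult_bas sum_idx_lists_Suc)
  have s: "smash_mul R (bas ([], [(l, q)])) (source (fgen i)) =
      (\<Sum>m\<in>UNIV. \<Sum>r\<in>UNIV. psmult (R r l i m) (smash_mul R (source (fgen r)) (bas ([], [(m, q)]))))" for l
    unfolding source_mul_smash_tens smash_tens_bas[symmetric] source_smash_tens smash_mul_smash_tens
    by (simp del: acg.simps add: sum_idx_lists_Suc lin_acg_single smash_tens_lin fone_def[symmetric] del: smash_tens_bas)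
  have "smash_tmul R (comult (bas ([], [(p, q)]))) (ptens (target_gen i) smash_one) =
      (\<Sum>m\<in>UNIV. ptens (smash_mul R (bas ([], [(p, m)])) (target_gen i)) (bas ([], [(m, q)])))"
    unfolding X tens_mul_sum1 smash_tmul_ptens by simp
  also have "kcong (tens_ker R) \<dots> (\<Sum>m\<in>UNIV. ptens (\<Sum>l\<in>UNIV. \<Sum>r\<in>UNIV. psmult (R r l i m) (smash_mul R (target_gen r) (bas ([], [(p, l)])))) (bas ([], [(m, q)])))"
    by (intro tens_ker.cong_sum kcong_tens_ptens1 cgen_mul_target_gen_cong)
  also have "\<dots> = (\<Sum>l\<in>UNIV. \<Sum>m\<in>UNIV. \<Sum>r\<in>UNIV. psmult (R r l i m) (ptens (smash_mul R (target R (fgen r)) (bas ([], [(p, l)]))) (bas ([], [(m, q)]))))"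
    by (simp add: ptens_lin target_fgen) (rule sum.swap)
  also have "kcong (tens_ker R) \<dots> (\<Sum>l\<in>UNIV. \<Sum>m\<in>UNIV. \<Sum>r\<in>UNIV. psmult (R r l i m) (ptens (bas ([], [(p, l)])) (smash_mul R (source (fgen r)) (bas ([], [(m, q)])))))"
    by (intro tens_ker.cong_sum tens_ker.cong_psmult kcong_tens_balanced)
  also have "\<dots> = smash_tmul R (comult (bas ([], [(p, q)]))) (ptens smash_one (source (fgen i)))"
    unfolding X tens_mul_sum1 smash_tmul_ptens by (simp add: s ptens_lin)
  finally show ?thesis .
qed

lemma balanced_cgen:
  assumes Q: "QYBE R"
  shows "balanced R (bas ([], [(p, q)]))"
proof -
  let ?X = "comult (bas ([], [(p, q)]))"
  have w: "kcong (tens_ker R) (smash_tmul R ?X (ptens (target R (bas a)) smash_one)) (smash_tmul R ?X (ptens smash_one (source (bas a))))" for a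
  proof (induct a)
    case Nil
    then show ?case by (simp add: target_fone[unfolded fone_def] source_fone[unfolded fone_def])
  next
    case (Cons i a)
    have e1: "target R (bas (i # a)) = smash_mul R (target R (bas a)) (target_gen i)" by (simp add: target_def)
    have e2: "source (bas (i # a)) = smash_mul R (source (fgen i)) (source (bas a))" by (rule source_cons)
    have "smash_tmul R ?X (ptens (target R (bas (i # a))) smash_one)
      = smash_tmul R (smash_tmul R ?X (ptens (target R (bas a)) smash_one)) (ptens (target_gen i) smash_one)"
      unfolding e1 smash_tmul_assoc smash_tmul_ptens by simp
    also have "kcong (tens_ker R) \<dots> (smash_tmul R (smash_tmul R ?X (ptens smash_one (source (bas a)))) (ptens (target_gen i) smash_one))"
      by (rule kcong_tens_mul_right[OF Q Cons])
    also have "\<dots> = smash_tmul R (smash_tmul R ?X (ptens (target_gen i) smash_one)) (ptens smash_one (source (bas a)))"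
      unfolding smash_tmul_assoc smash_tmul_ptens by simp
    also have "kcong (tens_ker R) \<dots> (smash_tmul R (smash_tmul R ?X (ptens smash_one (source (fgen i)))) (ptens smash_one (source (bas a))))"
      by (rule kcong_tens_mul_right[OF Q balanced_cgen_step])
    also have "\<dots> = smash_tmul R ?X (ptens smash_one (source (bas (i # a))))"
      unfolding e2 smash_tmul_assoc smash_tmul_ptens by simp
    finally show ?case .
  qed
  have "kcong (tens_ker R) (smash_tmul R ?X (ptens (target R a) smash_one)) (smash_tmul R ?X (ptens smash_one (source a)))" for a
  proof (rule tens_ker.cong_k_linear[of "\<lambda>a. smash_tmul R ?X (ptens (target R a) smash_one)" "\<lambda>a. smash_tmul R ?X (ptens smash_one (source a))"])
    show "k_linear (\<lambda>a. smash_tmul R ?X (ptens (target R a) smash_one))"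
      using k_linear_comp[OF k_linear_tens_mul2 k_linear_comp[OF k_linear_ptens1 k_linear_target]] by blast
    show "k_linear (\<lambda>a. smash_tmul R ?X (ptens smash_one (source a)))"
      using k_linear_comp[OF k_linear_tens_mul2 k_linear_comp[OF k_linear_ptens2 k_linear_source]] by blast
  qed (rule w)
  then show ?thesis unfolding balanced_def st_defect_def tens_mul_diff2 kcong_def by blast
qed

lemma bas_empty_cons: "bas ([], g # w) = smash_mul R (bas ([], [g])) (bas ([], w))"
  by (simp add: smash_mul_bas_empty)

lemma balanced_all:
  assumes Q: "QYBE R"
  shows "balanced R h"
proof -
  have e: "balanced R (bas ([], w))" for w
  proof (induct w)
    case Nil
    then show ?case using balanced_one[of R] by (simp add: smash_one_def)
  next
    case (Cons g w)
    obtain p q where g: "g = (p, q)" by (cases g)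
    show ?case
      by (subst bas_empty_cons[of _ _ R], unfold g, rule balanced_mul[OF Q balanced_cgen[OF Q] Cons])
  qed
  have "balanced R (bas z)" for z
  proof -
    obtain x w where z: "z = (x, w)" by (cases z)
    have "bas z = smash_mul R (source (bas x)) (bas ([], w))"
      using source_mul_smash_tens[of R "bas x" "bas []" w] by (simp add: z)
    then show ?thesis by (simp add: balanced_mul[OF Q balanced_source[OF Q] e])
  qed
  then have "balanced R (lin bas h)" by (intro balanced_lin)
  then show ?thesis by (simp add: lin_expand)
qed

lemma comult_takeuchi:
  assumes Q: "QYBE R"
  shows "lin (\<lambda>(x, y). ptens (smash_mul R (bas x) (target R a)) (bas y)) (comult h)
      - lin (\<lambda>(x, y). ptens (bas x) (smash_mul R (bas y) (source a))) (comult h) \<in> tens_ker R"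
proof -
  have "lin (\<lambda>(x, y). ptens (smash_mul R (bas x) (target R a)) (bas y)) (comult h)
      - lin (\<lambda>(x, y). ptens (bas x) (smash_mul R (bas y) (source a))) (comult h)
        = smash_tmul R (comult h) (st_defect R a)"
    unfolding st_defect_def tens_mul_diff2 smash_tmul_ptens_left by simp
  then show ?thesis using balanced_all[OF Q] unfolding balanced_def by simp
qed

section \<open>The bialgebroid\<close>

lemma comult_target_gen: "comult (target_gen u) = (\<Sum>l\<in>UNIV. ptens (target_gen l) (bas ([], [(l, u)])))"
  unfolding target_gen_def k_linear_sum[OF k_linear_comult]
  by (simp add: comult_bas sum_idx_lists_Suc ptens_sum1) (rule sum.swap)

lemma comult_target_word:
  assumes Q: "QYBE R"
  shows "kcong (tens_ker R) (comult (target_word R b)) (ptens smash_one (target_word R b))"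
proof (induct b)
  case Nil
  then show ?case by (simp add: comult_smash_one)
next
  case (Cons u b)
  have "comult (target_word R (u # b)) = smash_tmul R (comult (target_word R b)) (comult (target_gen u))"
    by (simp add: comult_mul)
  also have "kcong (tens_ker R) \<dots> (smash_tmul R (ptens smash_one (target_word R b)) (comult (target_gen u)))"
    by (rule kcong_tens_mul_right[OF Q Cons])
  also have "\<dots> = (\<Sum>l\<in>UNIV. ptens (smash_mul R (target R (fgen l)) smash_one) (smash_mul R (target_word R b) (bas ([], [(l, u)]))))"
    unfolding comult_target_gen tens_mul_sum2 smash_tmul_ptens by (simp add: target_fgen)
  also have "kcong (tens_ker R) \<dots> (\<Sum>l\<in>UNIV. ptens smash_one (smash_mul R (source (fgen l)) (smash_mul R (target_word R b) (bas ([], [(l, u)])))))"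
    by (intro tens_ker.cong_sum kcong_tens_balanced)
  also have "kcong (tens_ker R) \<dots> (\<Sum>l\<in>UNIV. ptens smash_one (smash_mul R (target_word R b) (smash_mul R (source (fgen l)) (bas ([], [(l, u)])))))"
  proof (intro tens_ker.cong_sum kcong_tens_ptens2)
    fix l
    show "kcong (smash_ker R) (smash_mul R (source (fgen l)) (smash_mul R (target_word R b) (bas ([], [(l, u)]))))
        (smash_mul R (target_word R b) (smash_mul R (source (fgen l)) (bas ([], [(l, u)]))))"
      using kcong_smash_mul1[OF Q smash_commute_source_gen_target_word[OF Q, of l b, unfolded smash_commute_def], of "bas ([], [(l, u)])"]
      by (simp add: smash_assoc)
  qed
  also have "\<dots> = ptens smash_one (target_word R (u # b))"
    by (simp add: ptens_sum2[symmetric] smash_sum2[symmetric] target_gen_def source_fgen smash_mul_bas)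
  finally show ?case .
qed

lemma comult_target:
  "QYBE R \<Longrightarrow> kcong (tens_ker R) (comult (target R b)) (ptens smash_one (target R b))"
  by (rule tens_ker.cong_k_linear[of "\<lambda>b. comult (target R b)" "\<lambda>b. ptens smash_one (target R b)"])
     (auto simp: target_def comult_target_word intro: k_linear_comp)

lemma comult_source_target_mul:
  assumes Q: "QYBE R"
  shows "comult (smash_mul R (source a) (smash_mul R (target R b) h))
      - lin (\<lambda>(x, y). ptens (smash_mul R (source a) (bas x)) (smash_mul R (target R b) (bas y))) (comult h) \<in> tens_ker R"
proof -
  have "comult (smash_mul R (source a) (smash_mul R (target R b) h))
    = smash_tmul R (ptens (source a) smash_one) (smash_tmul R (comult (target R b)) (comult h))"
    by (simp add: comult_mul comult_source)
  also have "kcong (tens_ker R) \<dots> (smash_tmul R (ptens (source a) smash_one) (smash_tmul R (ptens smash_one (target R b)) (comult h)))"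
    by (rule kcong_tens_mul_source[OF Q kcong_tens_mul_right[OF Q comult_target[OF Q]]])
  also have "\<dots> = lin (\<lambda>(x, y). ptens (smash_mul R (source a) (bas x)) (smash_mul R (target R b) (bas y))) (comult h)"
  proof (rule k_linear_eqI[of "\<lambda>Y. smash_tmul R (ptens (source a) smash_one) (smash_tmul R (ptens smash_one (target R b)) Y)"])
    show "k_linear (\<lambda>Y. smash_tmul R (ptens (source a) smash_one) (smash_tmul R (ptens smash_one (target R b)) Y))"
      using k_linear_comp[OF k_linear_tens_mul2 k_linear_tens_mul2] by blast
  next
    fix z :: "('a list \<times> ('a \<times> 'a) list) \<times> ('a list \<times> ('a \<times> 'a) list)"
    obtain x y where z: "z = (x, y)" by (cases z)
    show "smash_tmul R (ptens (source a) smash_one) (smash_tmul R (ptens smash_one (target R b)) (bas z)) =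
      lin (\<lambda>(x, y). ptens (smash_mul R (source a) (bas x)) (smash_mul R (target R b) (bas y))) (bas z)"
      unfolding z ptens_bas[symmetric] smash_tmul_ptens by simp
  qed simp
  finally show ?thesis by (simp add: kcong_def)
qed

lemma lin_mod_k_linear:
  "k_linear f \<Longrightarrow> (\<And>x. x \<in> N \<Longrightarrow> f x \<in> N') \<Longrightarrow> 0 \<in> N' \<Longrightarrow> lin_mod N f N'"
  unfolding lin_mod_def k_linear_def by simp

lemma lin_mod_source: "lin_mod (SR_ker R) source (smash_ker R)"
  by (rule lin_mod_k_linear) (simp_all add: source_SR_ker)

lemma lin_mod_target: "QYBE R \<Longrightarrow> lin_mod (SR_ker R) (target R) (smash_ker R)"
  by (rule lin_mod_k_linear) (simp_all add: target_SR_ker)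

lemma lin_mod_comult: "QYBE R \<Longrightarrow> lin_mod (smash_ker R) comult (tens_ker R)"
  by (rule lin_mod_k_linear) (simp_all add: comult_smash_ker)

lemma lin_mod_counit: "QYBE R \<Longrightarrow> lin_mod (smash_ker R) counit (SR_ker R)"
  by (rule lin_mod_k_linear) (simp_all add: counit_smash_ker)

lemma counit_source_target_mul:
  "QYBE R \<Longrightarrow> counit (smash_mul R (source a) (smash_mul R (target R b) h)) - fmul a (fmul (counit h) b) \<in> SR_ker R"
  unfolding counit_source_mul fmul_diff2[symmetric] by (rule SR_ker_mul(2), fold kcong_def, rule counit_target)

lemma counit_mul_target_counit:
  "QYBE R \<Longrightarrow> counit (smash_mul R g h) - counit (smash_mul R g (target R (counit h))) \<in> SR_ker R"
  using SR_ker.cong_sym[OF counit_mul_target[of R g "counit h"]]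
  by (simp add: kcong_def counit_mul_source_counit[of R g h])

lemma comult_mul_mod:
  "comult (smash_mul R g h) - bilin (\<lambda>(x, y) (x', y'). ptens (smash_mul R (bas x) (bas x')) (smash_mul R (bas y) (bas y')))
     (comult g) (comult h) \<in> tens_ker R"
  by (simp add: comult_mul tens_mul_def)

lemma counit_smash_one: "counit smash_one = fone"
  by (simp add: smash_one_def counit_bas fone_def)

lemma bialgebroid_smash:
  assumes "QYBE R"
  shows "bialgebroid fmul fone (SR_ker R) (smash_mul R) smash_one (smash_ker R) source (target R) comult counit"
  unfolding bialgebroid_def tker3_def
  by (simp add: assms quot_alg_SR quot_alg_smash lin_mod_source lin_mod_target lin_mod_comult lin_mod_counit
      source_mul target_fmul source_fone target_fone source_target_commute comult_source_target_mul
      counit_source_target_mul comult_coassoc kspan_zero comult_counit_source comult_counit_target comult_takeuchi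
      comult_mul_mod comult_smash_one counit_smash_one counit_mul_source_counit[symmetric]
      counit_mul_target_counit)

theorem proposition4p3:
  fixes R :: "'n::finite \<Rightarrow> 'n \<Rightarrow> 'n \<Rightarrow> 'n \<Rightarrow> 'k::comm_ring_1"
  assumes "QYBE R"
  shows "\<exists>s t D E.
    bialgebroid fmul fone (SR_ker R) (smash_mul R) smash_one (smash_ker R) s t D E \<and>
    (\<forall>i. s (fgen i) - bas ([i], []) \<in> smash_ker R) \<and>
    (\<forall>i. t (fgen i) - (\<Sum>u\<in>UNIV. bas ([u], [(u, i)])) \<in> smash_ker R) \<and>
    (\<forall>i u v. D (bas ([i], [(u, v)]))
       - (\<Sum>l\<in>UNIV. ptens (bas ([i], [(u, l)])) (bas ([], [(l, v)])))
       \<in> tker2 (smash_mul R) (smash_ker R) s t) \<and>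
    (\<forall>i u v. E (bas ([i], [(u, v)])) - (if u = v then fgen i else 0) \<in> SR_ker R)"
  using bialgebroid_smash[OF assms]
  by (intro exI[of _ source] exI[of _ "target R"] exI[of _ comult] exI[of _ counit])
     (simp add: source_fgen target_fgen target_gen_def comult_gen counit_gen del: ptens_bas)

end
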